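(* Let $H$ be a $k$-linear semi-Hopf category, let $A$ be a right $H$-comodule category and let $B=A^{{\rm co}H}$. The following are equivalent: (1) ${\rm can}^z_{xy}$ is bijective for all $x,y,z\in X$; (2) for all $x,y\in X$, ${\rm can}^y_{xy}$ is bijective and ${\rm can}^x_{xy}$ has a left inverse; (3) for all $x,y\in X$ there is a $k$-linear map $\gamma_{xy}:H_{xy}\to A_{yx}\otimes_{B_x}A_{xy}$, written $\gamma_{xy}(h)=\sum_i l_i(h)\otimes_{B_x}r_i(h)$, such that for all $h\in H_{xy}$ and $a\in A_{xy}$: $$\sum_i l_i(h)r_i(h)_{[0]}\otimes r_i(h)_{[1]}=1_y\otimes h,\qquad \sum_i a_{[0]}l_i(a_{[1]})\otimes_{B_x}r_i(a_{[1]})=1_x\otimes_{B_x}a.$$ (When these hold, $A$ is called an $H$-Galois category extension of $B$.)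
   Context: Let $k$ be a commutative ring; unadorned $\otimes$ is over $k$. A $k$-linear category $A$ with class of objects $X$ consists of $k$-modules $A_{xy}$, associative compositions $A_{xy}\otimes A_{yz}\to A_{xz}$, $a\otimes b\mapsto ab$, and units $1_x\in A_{xx}$. A $k$-linear semi-Hopf category $H$ (objects $X$) is a $k$-linear category in which each $H_{xy}$ is a $k$-coalgebra with $\Delta_{xy}(h)=h_{(1)}\otimes h_{(2)}$ and counit $\varepsilon_{xy}$, such that $\Delta_{xz}(hh')=h_{(1)}h'_{(1)}\otimes h_{(2)}h'_{(2)}$, $\Delta_{xx}(1_x)=1_x\otimes1_x$, $\varepsilon_{xz}(hh')=\varepsilon_{xy}(h)\varepsilon_{yz}(h')$, $\varepsilon_{xx}(1_x)=1$. A right $H$-comodule category is a $k$-linear category $A$ with objects $X$ such that each $A_{xy}$ is a right $H_{xy}$-comodule, $\rho_{xy}(a)=a_{[0]}\otimes a_{[1]}$, with $\rho_{xz}(ab)=a_{[0]}b_{[0]}\otimes a_{[1]}b_{[1]}$ and $\rho_{xx}(1_x)=1_x\otimes1_x$. Its coinvariants are the $k$-algebras $B_x=A^{{\rm co}H}_x=\{a\in A_{xx}\mid\rho_{xx}(a)=a\otimes1_x\}$; $A_{xy}$ is a $B_x$-$B_y$-bimodule by multiplication. The canonical maps are ${\rm can}^z_{xy}:A_{zx}\otimes_{B_x}A_{xy}\to A_{zy}\otimes H_{xy}$, ${\rm can}^z_{xy}(a\otimes_{B_x}a')=aa'_{[0]}\otimes a'_{[1]}$. *)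

theory Defs
  imports Main
begin

record ('a, 'k) kmod =
  kcarrier :: "'a set"
  kadd :: "'a \<Rightarrow> 'a \<Rightarrow> 'a"
  kzero :: "'a"
  ksmult :: "'k \<Rightarrow> 'a \<Rightarrow> 'a"

definition is_kmod :: "('a, 'k::comm_ring_1) kmod \<Rightarrow> bool" where
  "is_kmod M \<longleftrightarrow>
     kzero M \<in> kcarrier M \<and>
     (\<forall>x\<in>kcarrier M. \<forall>y\<in>kcarrier M. kadd M x y \<in> kcarrier M) \<and>
     (\<forall>c. \<forall>x\<in>kcarrier M. ksmult M c x \<in> kcarrier M) \<and>
     (\<forall>x\<in>kcarrier M. \<forall>y\<in>kcarrier M. \<forall>z\<in>kcarrier M.
        kadd M (kadd M x y) z = kadd M x (kadd M y z)) \<and>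
     (\<forall>x\<in>kcarrier M. \<forall>y\<in>kcarrier M. kadd M x y = kadd M y x) \<and>
     (\<forall>x\<in>kcarrier M. kadd M (kzero M) x = x) \<and>
     (\<forall>x\<in>kcarrier M. \<exists>y\<in>kcarrier M. kadd M x y = kzero M) \<and>
     (\<forall>c. \<forall>x\<in>kcarrier M. \<forall>y\<in>kcarrier M.
        ksmult M c (kadd M x y) = kadd M (ksmult M c x) (ksmult M c y)) \<and>
     (\<forall>c d. \<forall>x\<in>kcarrier M. ksmult M (c + d) x = kadd M (ksmult M c x) (ksmult M d x)) \<and>
     (\<forall>c d. \<forall>x\<in>kcarrier M. ksmult M (c * d) x = ksmult M c (ksmult M d x)) \<and>
     (\<forall>x\<in>kcarrier M. ksmult M 1 x = x)"

definition linmap :: "('a, 'k) kmod \<Rightarrow> ('b, 'k) kmod \<Rightarrow> ('a \<Rightarrow> 'b) \<Rightarrow> bool" where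
  "linmap M N f \<longleftrightarrow>
     (\<forall>x\<in>kcarrier M. f x \<in> kcarrier N) \<and>
     (\<forall>x\<in>kcarrier M. \<forall>y\<in>kcarrier M. f (kadd M x y) = kadd N (f x) (f y)) \<and>
     (\<forall>c. \<forall>x\<in>kcarrier M. f (ksmult M c x) = ksmult N c (f x))"

definition ksum :: "('a, 'k) kmod \<Rightarrow> ('i \<Rightarrow> 'a) \<Rightarrow> 'i set \<Rightarrow> 'a" where
  "ksum T g S = Finite_Set.fold (\<lambda>q acc. kadd T (g q) acc) (kzero T) S"

text \<open>
  The tensor product of M and N, balanced with respect to a set Bal of pairs
  (p, q) of elements of M x N (meaning p and q are to be identified), is
  constructed as the free abelian group on pairs (m, n), m in M, n in N,
  modulo biadditivity and the balancing relations.  Elements are cosets of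
  finitely supported integer-valued functions on M x N.  The k-action is
  through the left factor.  With Bal = kbal M N this is the tensor product
  over k; adding the relations (m b, n) ~ (m, b n) for b in an algebra B
  gives the tensor product over B.
\<close>

definition delta :: "'p \<Rightarrow> 'p \<Rightarrow> int" where
  "delta p = (\<lambda>q. if q = p then 1 else 0)"

definition tfree :: "('a, 'k) kmod \<Rightarrow> ('b, 'k) kmod \<Rightarrow> ('a \<times> 'b \<Rightarrow> int) set" where
  "tfree M N = {f. finite {p. f p \<noteq> 0} \<and> {p. f p \<noteq> 0} \<subseteq> kcarrier M \<times> kcarrier N}"

inductive_set zspan :: "('p \<Rightarrow> int) set \<Rightarrow> ('p \<Rightarrow> int) set" for S where
  zspan_zero: "(\<lambda>_. 0) \<in> zspan S"
| zspan_gen: "s \<in> S \<Longrightarrow> s \<in> zspan S"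
| zspan_diff: "f \<in> zspan S \<Longrightarrow> g \<in> zspan S \<Longrightarrow> (\<lambda>q. f q - g q) \<in> zspan S"

definition trels :: "('a, 'k) kmod \<Rightarrow> ('b, 'k) kmod \<Rightarrow> (('a \<times> 'b) \<times> ('a \<times> 'b)) set
    \<Rightarrow> ('a \<times> 'b \<Rightarrow> int) set" where
  "trels M N Bal =
     {(\<lambda>q. delta (kadd M m m', n) q - delta (m, n) q - delta (m', n) q) | m m' n.
        m \<in> kcarrier M \<and> m' \<in> kcarrier M \<and> n \<in> kcarrier N}
   \<union> {(\<lambda>q. delta (m, kadd N n n') q - delta (m, n) q - delta (m, n') q) | m n n'.
        m \<in> kcarrier M \<and> n \<in> kcarrier N \<and> n' \<in> kcarrier N}
   \<union> {(\<lambda>q. delta p q - delta p' q) | p p'. (p, p') \<in> Bal}"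

definition tcls :: "('a, 'k) kmod \<Rightarrow> ('b, 'k) kmod \<Rightarrow> (('a \<times> 'b) \<times> ('a \<times> 'b)) set
    \<Rightarrow> ('a \<times> 'b \<Rightarrow> int) \<Rightarrow> ('a \<times> 'b \<Rightarrow> int) set" where
  "tcls M N Bal f = {g \<in> tfree M N. (\<lambda>q. g q - f q) \<in> zspan (trels M N Bal)}"

definition trep :: "('p \<Rightarrow> int) set \<Rightarrow> ('p \<Rightarrow> int)" where
  "trep t = (SOME f. f \<in> t)"

definition fpush :: "('p \<Rightarrow> 'q) \<Rightarrow> ('p \<Rightarrow> int) \<Rightarrow> ('q \<Rightarrow> int)" where
  "fpush \<phi> f = (\<lambda>r. \<Sum>q\<in>{q. f q \<noteq> 0 \<and> \<phi> q = r}. f q)"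

definition tensor :: "('a, 'k) kmod \<Rightarrow> ('b, 'k) kmod \<Rightarrow> (('a \<times> 'b) \<times> ('a \<times> 'b)) set
    \<Rightarrow> (('a \<times> 'b \<Rightarrow> int) set, 'k) kmod" where
  "tensor M N Bal =
     \<lparr> kcarrier = tcls M N Bal ` tfree M N,
       kadd = (\<lambda>t s. tcls M N Bal (\<lambda>q. trep t q + trep s q)),
       kzero = tcls M N Bal (\<lambda>_. 0),
       ksmult = (\<lambda>c t. tcls M N Bal (fpush (\<lambda>(m, n). (ksmult M c m, n)) (trep t))) \<rparr>"

definition tsimple :: "('a, 'k) kmod \<Rightarrow> ('b, 'k) kmod \<Rightarrow> (('a \<times> 'b) \<times> ('a \<times> 'b)) set
    \<Rightarrow> 'a \<Rightarrow> 'b \<Rightarrow> ('a \<times> 'b \<Rightarrow> int) set" where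
  "tsimple M N Bal m n = tcls M N Bal (delta (m, n))"

definition tlift :: "('a, 'k::comm_ring_1) kmod \<Rightarrow> ('b, 'k) kmod \<Rightarrow> (('a \<times> 'b) \<times> ('a \<times> 'b)) set
    \<Rightarrow> ('c, 'k) kmod \<Rightarrow> ('a \<times> 'b \<Rightarrow> 'c) \<Rightarrow> ('a \<times> 'b \<Rightarrow> int) set \<Rightarrow> 'c" where
  "tlift M N Bal T \<beta> t =
     (let f = trep t in ksum T (\<lambda>q. ksmult T (of_int (f q)) (\<beta> q)) {q. f q \<noteq> 0})"

definition tmap :: "('a, 'k::comm_ring_1) kmod \<Rightarrow> ('b, 'k) kmod \<Rightarrow> (('a \<times> 'b) \<times> ('a \<times> 'b)) set
    \<Rightarrow> ('c, 'k) kmod \<Rightarrow> ('d, 'k) kmod \<Rightarrow> (('c \<times> 'd) \<times> ('c \<times> 'd)) set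
    \<Rightarrow> ('a \<Rightarrow> 'c) \<Rightarrow> ('b \<Rightarrow> 'd) \<Rightarrow> ('a \<times> 'b \<Rightarrow> int) set \<Rightarrow> ('c \<times> 'd \<Rightarrow> int) set" where
  "tmap M N Bal M' N' Bal' f g =
     tlift M N Bal (tensor M' N' Bal') (\<lambda>(m, n). tsimple M' N' Bal' (f m) (g n))"

definition kbal :: "('a, 'k) kmod \<Rightarrow> ('b, 'k) kmod \<Rightarrow> (('a \<times> 'b) \<times> ('a \<times> 'b)) set" where
  "kbal M N = {((ksmult M c m, n), (m, ksmult N c n)) | c m n.
                  m \<in> kcarrier M \<and> n \<in> kcarrier N}"

abbreviation ktens where "ktens M N \<equiv> tensor M N (kbal M N)"
abbreviation ksimple where "ksimple M N \<equiv> tsimple M N (kbal M N)"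
abbreviation klift where "klift M N \<equiv> tlift M N (kbal M N)"
abbreviation kmap where "kmap M N M' N' \<equiv> tmap M N (kbal M N) M' N' (kbal M' N')"

definition kassoc :: "('a, 'k::comm_ring_1) kmod \<Rightarrow> ('b, 'k) kmod \<Rightarrow> ('c, 'k) kmod
    \<Rightarrow> ((('a \<times> 'b \<Rightarrow> int) set \<times> 'c) \<Rightarrow> int) set \<Rightarrow> ('a \<times> ('b \<times> 'c \<Rightarrow> int) set \<Rightarrow> int) set" where
  "kassoc M N P =
     klift (ktens M N) P (ktens M (ktens N P))
       (\<lambda>(t, p). klift M N (ktens M (ktens N P))
                  (\<lambda>(m, n). ksimple M (ktens N P) m (ksimple N P n p)) t)"

definition kprod :: "('a1, 'k::comm_ring_1) kmod \<Rightarrow> ('b1, 'k) kmod \<Rightarrow> ('a2, 'k) kmod \<Rightarrow> ('b2, 'k) kmod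
    \<Rightarrow> ('a3, 'k) kmod \<Rightarrow> ('b3, 'k) kmod \<Rightarrow> ('a1 \<Rightarrow> 'a2 \<Rightarrow> 'a3) \<Rightarrow> ('b1 \<Rightarrow> 'b2 \<Rightarrow> 'b3)
    \<Rightarrow> ('a1 \<times> 'b1 \<Rightarrow> int) set \<Rightarrow> ('a2 \<times> 'b2 \<Rightarrow> int) set \<Rightarrow> ('a3 \<times> 'b3 \<Rightarrow> int) set" where
  "kprod M1 N1 M2 N2 M3 N3 f g t s =
     klift M1 N1 (ktens M3 N3)
       (\<lambda>(a, b). klift M2 N2 (ktens M3 N3) (\<lambda>(c, d). ksimple M3 N3 (f a c) (g b d)) s) t"

definition klinform :: "('a, 'k::comm_ring_1) kmod \<Rightarrow> ('a \<Rightarrow> 'k) \<Rightarrow> bool" where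
  "klinform M e \<longleftrightarrow>
     (\<forall>x\<in>kcarrier M. \<forall>y\<in>kcarrier M. e (kadd M x y) = e x + e y) \<and>
     (\<forall>c. \<forall>x\<in>kcarrier M. e (ksmult M c x) = c * e x)"

definition is_coalgebra :: "('h, 'k::comm_ring_1) kmod \<Rightarrow> ('h \<Rightarrow> ('h \<times> 'h \<Rightarrow> int) set)
    \<Rightarrow> ('h \<Rightarrow> 'k) \<Rightarrow> bool" where
  "is_coalgebra C D e \<longleftrightarrow>
     is_kmod C \<and> linmap C (ktens C C) D \<and> klinform C e \<and>
     (\<forall>h\<in>kcarrier C.
        kassoc C C C (kmap C C (ktens C C) C D id (D h)) = kmap C C C (ktens C C) id D (D h)) \<and>
     (\<forall>h\<in>kcarrier C. klift C C C (\<lambda>(a, b). ksmult C (e a) b) (D h) = h) \<and>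
     (\<forall>h\<in>kcarrier C. klift C C C (\<lambda>(a, b). ksmult C (e b) a) (D h) = h)"

definition is_rcomodule :: "('a, 'k::comm_ring_1) kmod \<Rightarrow> ('h, 'k) kmod
    \<Rightarrow> ('h \<Rightarrow> ('h \<times> 'h \<Rightarrow> int) set) \<Rightarrow> ('h \<Rightarrow> 'k) \<Rightarrow> ('a \<Rightarrow> ('a \<times> 'h \<Rightarrow> int) set) \<Rightarrow> bool" where
  "is_rcomodule M C D e rho \<longleftrightarrow>
     is_kmod M \<and> linmap M (ktens M C) rho \<and>
     (\<forall>m\<in>kcarrier M.
        kassoc M C C (kmap M C (ktens M C) C rho id (rho m)) = kmap M C M (ktens C C) id D (rho m)) \<and>
     (\<forall>m\<in>kcarrier M. klift M C M (\<lambda>(a, h). ksmult M (e h) a) (rho m) = m)"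

definition klin_cat :: "'x set \<Rightarrow> ('x \<Rightarrow> 'x \<Rightarrow> ('a, 'k::comm_ring_1) kmod)
    \<Rightarrow> ('x \<Rightarrow> 'x \<Rightarrow> 'x \<Rightarrow> 'a \<Rightarrow> 'a \<Rightarrow> 'a) \<Rightarrow> ('x \<Rightarrow> 'a) \<Rightarrow> bool" where
  "klin_cat X M mul one \<longleftrightarrow>
     (\<forall>x\<in>X. \<forall>y\<in>X. is_kmod (M x y)) \<and>
     (\<forall>x\<in>X. \<forall>y\<in>X. \<forall>z\<in>X. \<forall>a\<in>kcarrier (M x y). \<forall>b\<in>kcarrier (M y z).
        mul x y z a b \<in> kcarrier (M x z)) \<and>
     (\<forall>x\<in>X. \<forall>y\<in>X. \<forall>z\<in>X. \<forall>a\<in>kcarrier (M x y). \<forall>a'\<in>kcarrier (M x y). \<forall>b\<in>kcarrier (M y z).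
        mul x y z (kadd (M x y) a a') b = kadd (M x z) (mul x y z a b) (mul x y z a' b)) \<and>
     (\<forall>x\<in>X. \<forall>y\<in>X. \<forall>z\<in>X. \<forall>a\<in>kcarrier (M x y). \<forall>b\<in>kcarrier (M y z). \<forall>b'\<in>kcarrier (M y z).
        mul x y z a (kadd (M y z) b b') = kadd (M x z) (mul x y z a b) (mul x y z a b')) \<and>
     (\<forall>x\<in>X. \<forall>y\<in>X. \<forall>z\<in>X. \<forall>c. \<forall>a\<in>kcarrier (M x y). \<forall>b\<in>kcarrier (M y z).
        mul x y z (ksmult (M x y) c a) b = ksmult (M x z) c (mul x y z a b) \<and>
        mul x y z a (ksmult (M y z) c b) = ksmult (M x z) c (mul x y z a b)) \<and>
     (\<forall>x\<in>X. \<forall>y\<in>X. \<forall>z\<in>X. \<forall>w\<in>X. \<forall>a\<in>kcarrier (M x y). \<forall>b\<in>kcarrier (M y z). \<forall>c\<in>kcarrier (M z w).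
        mul x z w (mul x y z a b) c = mul x y w a (mul y z w b c)) \<and>
     (\<forall>x\<in>X. one x \<in> kcarrier (M x x)) \<and>
     (\<forall>x\<in>X. \<forall>y\<in>X. \<forall>a\<in>kcarrier (M x y). mul x x y (one x) a = a \<and> mul x y y a (one y) = a)"

definition semi_hopf_cat :: "'x set \<Rightarrow> ('x \<Rightarrow> 'x \<Rightarrow> ('h, 'k::comm_ring_1) kmod)
    \<Rightarrow> ('x \<Rightarrow> 'x \<Rightarrow> 'x \<Rightarrow> 'h \<Rightarrow> 'h \<Rightarrow> 'h) \<Rightarrow> ('x \<Rightarrow> 'h)
    \<Rightarrow> ('x \<Rightarrow> 'x \<Rightarrow> 'h \<Rightarrow> ('h \<times> 'h \<Rightarrow> int) set) \<Rightarrow> ('x \<Rightarrow> 'x \<Rightarrow> 'h \<Rightarrow> 'k) \<Rightarrow> bool" where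
  "semi_hopf_cat X H mul one D e \<longleftrightarrow>
     klin_cat X H mul one \<and>
     (\<forall>x\<in>X. \<forall>y\<in>X. is_coalgebra (H x y) (D x y) (e x y)) \<and>
     (\<forall>x\<in>X. \<forall>y\<in>X. \<forall>z\<in>X. \<forall>h\<in>kcarrier (H x y). \<forall>h'\<in>kcarrier (H y z).
        D x z (mul x y z h h') =
          kprod (H x y) (H x y) (H y z) (H y z) (H x z) (H x z) (mul x y z) (mul x y z)
                (D x y h) (D y z h') \<and>
        e x z (mul x y z h h') = e x y h * e y z h') \<and>
     (\<forall>x\<in>X. D x x (one x) = ksimple (H x x) (H x x) (one x) (one x) \<and> e x x (one x) = 1)"

definition rcomod_cat :: "'x set \<Rightarrow> ('x \<Rightarrow> 'x \<Rightarrow> ('h, 'k::comm_ring_1) kmod)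
    \<Rightarrow> ('x \<Rightarrow> 'x \<Rightarrow> 'x \<Rightarrow> 'h \<Rightarrow> 'h \<Rightarrow> 'h) \<Rightarrow> ('x \<Rightarrow> 'h)
    \<Rightarrow> ('x \<Rightarrow> 'x \<Rightarrow> 'h \<Rightarrow> ('h \<times> 'h \<Rightarrow> int) set) \<Rightarrow> ('x \<Rightarrow> 'x \<Rightarrow> 'h \<Rightarrow> 'k)
    \<Rightarrow> ('x \<Rightarrow> 'x \<Rightarrow> ('a, 'k) kmod) \<Rightarrow> ('x \<Rightarrow> 'x \<Rightarrow> 'x \<Rightarrow> 'a \<Rightarrow> 'a \<Rightarrow> 'a) \<Rightarrow> ('x \<Rightarrow> 'a)
    \<Rightarrow> ('x \<Rightarrow> 'x \<Rightarrow> 'a \<Rightarrow> ('a \<times> 'h \<Rightarrow> int) set) \<Rightarrow> bool" where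
  "rcomod_cat X H hmul hone D e A mul one rho \<longleftrightarrow>
     klin_cat X A mul one \<and>
     (\<forall>x\<in>X. \<forall>y\<in>X. is_rcomodule (A x y) (H x y) (D x y) (e x y) (rho x y)) \<and>
     (\<forall>x\<in>X. \<forall>y\<in>X. \<forall>z\<in>X. \<forall>a\<in>kcarrier (A x y). \<forall>b\<in>kcarrier (A y z).
        rho x z (mul x y z a b) =
          kprod (A x y) (H x y) (A y z) (H y z) (A x z) (H x z) (mul x y z) (hmul x y z)
                (rho x y a) (rho y z b)) \<and>
     (\<forall>x\<in>X. rho x x (one x) = ksimple (A x x) (H x x) (one x) (hone x))"

definition coinv :: "('x \<Rightarrow> 'x \<Rightarrow> ('h, 'k::comm_ring_1) kmod) \<Rightarrow> ('x \<Rightarrow> 'h)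
    \<Rightarrow> ('x \<Rightarrow> 'x \<Rightarrow> ('a, 'k) kmod) \<Rightarrow> ('x \<Rightarrow> 'x \<Rightarrow> 'a \<Rightarrow> ('a \<times> 'h \<Rightarrow> int) set) \<Rightarrow> 'x \<Rightarrow> 'a set" where
  "coinv H hone A rho x =
     {a \<in> kcarrier (A x x). rho x x a = ksimple (A x x) (H x x) a (hone x)}"

definition bbal :: "('x \<Rightarrow> 'x \<Rightarrow> ('a, 'k) kmod) \<Rightarrow> ('x \<Rightarrow> 'x \<Rightarrow> 'x \<Rightarrow> 'a \<Rightarrow> 'a \<Rightarrow> 'a)
    \<Rightarrow> 'a set \<Rightarrow> 'x \<Rightarrow> 'x \<Rightarrow> 'x \<Rightarrow> (('a \<times> 'a) \<times> ('a \<times> 'a)) set" where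
  "bbal A mul B z x y =
     kbal (A z x) (A x y) \<union>
     {((mul z x x a b, a'), (a, mul x x y b a')) | a b a'.
        a \<in> kcarrier (A z x) \<and> b \<in> B \<and> a' \<in> kcarrier (A x y)}"

definition btens where
  "btens H hone A mul rho z x y =
     tensor (A z x) (A x y) (bbal A mul (coinv H hone A rho x) z x y)"

definition bsimple where
  "bsimple H hone A mul rho z x y =
     tsimple (A z x) (A x y) (bbal A mul (coinv H hone A rho x) z x y)"

definition can where
  "can H hone A mul rho z x y =
     tlift (A z x) (A x y) (bbal A mul (coinv H hone A rho x) z x y) (ktens (A z y) (H x y))
       (\<lambda>(a, a'). kmap (A x y) (H x y) (A z y) (H x y) (mul z x y a) id (rho x y a'))"

end

theory Submission
  imports Defs "HOL-Algebra.Group" "HOL-Algebra.FiniteProduct"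
begin

text \<open>
  (1) implies (2) because the inverse of a bijective k-linear map is k-linear.  Given (2),
  the map \<open>\<gamma>\<^sub>x\<^sub>y(h) = (can\<^sup>y\<^sub>x\<^sub>y)\<^sup>-\<^sup>1(1\<^sub>y \<otimes> h)\<close> is a translation map as in (3).
  Conversely, a translation map yields the inverse \<open>a \<otimes> h \<mapsto> \<Sum>\<^sub>i a l\<^sub>i(h) \<otimes>\<^bsub>B\<^sub>x\<^esub> r\<^sub>i(h)\<close>
  of every \<open>can\<^sup>z\<^sub>x\<^sub>y\<close>: both composites are checked on simple tensors, using that \<open>can\<close>
  and this map commute with left multiplication by A, and that \<open>\<rho>(b a) = b \<rho>(a)\<close> for
  coinvariant b, which is also what makes \<open>can\<close> well defined over \<open>B\<^sub>x\<close>.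
\<close>

section \<open>Modules as abelian groups\<close>

definition additive_group :: "('a, 'k) kmod \<Rightarrow> 'a monoid" where
  "additive_group T = \<lparr>carrier = kcarrier T, mult = kadd T, one = kzero T\<rparr>"

lemma additive_group_simps[simp]: "carrier (additive_group T) = kcarrier T" "mult (additive_group T)
  = kadd T" "one (additive_group T) = kzero T"
  by (simp_all add: additive_group_def)

lemma is_kmodD:
  assumes "is_kmod M"
  shows "kzero M \<in> kcarrier M"
   "\<forall>x\<in>kcarrier M. \<forall>y\<in>kcarrier M. kadd M x y \<in> kcarrier M"
   "\<forall>c. \<forall>x\<in>kcarrier M. ksmult M c x \<in> kcarrier M"
   "\<forall>x\<in>kcarrier M. \<forall>y\<in>kcarrier M. \<forall>z\<in>kcarrier M.
        kadd M (kadd M x y) z = kadd M x (kadd M y z)"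
   "\<forall>x\<in>kcarrier M. \<forall>y\<in>kcarrier M. kadd M x y = kadd M y x"
   "\<forall>x\<in>kcarrier M. kadd M (kzero M) x = x"
   "\<forall>x\<in>kcarrier M. \<exists>y\<in>kcarrier M. kadd M x y = kzero M"
   "\<forall>c. \<forall>x\<in>kcarrier M. \<forall>y\<in>kcarrier M.
        ksmult M c (kadd M x y) = kadd M (ksmult M c x) (ksmult M c y)"
   "\<forall>c d. \<forall>x\<in>kcarrier M. ksmult M (c + d) x = kadd M (ksmult M c x) (ksmult M d x)"
   "\<forall>c d. \<forall>x\<in>kcarrier M. ksmult M (c * d) x = ksmult M c (ksmult M d x)"
   "\<forall>x\<in>kcarrier M. ksmult M 1 x = x"
  apply (insert assms[unfolded is_kmod_def])
  apply (elim conjE; assumption)+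
  done

lemma comm_group_additive_group:
  assumes "is_kmod (T::('a,'k::comm_ring_1) kmod)"
  shows "comm_group (additive_group T)"
proof (rule comm_groupI)
  note A = is_kmodD[OF assms]
  fix x y z
  assume x: "x \<in> carrier (additive_group T)" and y: "y \<in> carrier (additive_group T)" and z: "z \<in> carrier
      (additive_group T)"
  show "x \<otimes>\<^bsub>additive_group T\<^esub> y \<in> carrier (additive_group T)" using A(2) x y by simp
  show "x \<otimes>\<^bsub>additive_group T\<^esub> y \<otimes>\<^bsub>additive_group T\<^esub> z
      = x \<otimes>\<^bsub>additive_group T\<^esub> (y \<otimes>\<^bsub>additive_group T\<^esub> z)" using A(4) x y z by simp
  show "x \<otimes>\<^bsub>additive_group T\<^esub> y = y \<otimes>\<^bsub>additive_group T\<^esub> x" using A(5) x y by simp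
next
  note A = is_kmodD[OF assms]
  show "\<one>\<^bsub>additive_group T\<^esub> \<in> carrier (additive_group T)" using A(1) by simp
  fix x assume x: "x \<in> carrier (additive_group T)"
  show "\<one>\<^bsub>additive_group T\<^esub> \<otimes>\<^bsub>additive_group T\<^esub> x = x" using A(6) x by simp
  from A(7) x obtain y where y: "y \<in> kcarrier T" "kadd T x y = kzero T" by auto
  then have "kadd T y x = kzero T" using A(5) x by simp
  then show "\<exists>y\<in>carrier (additive_group T). y \<otimes>\<^bsub>additive_group T\<^esub> x
      = \<one>\<^bsub>additive_group T\<^esub>" using y by auto
qed

locale kmodule =
  fixes T :: "('a, 'k::comm_ring_1) kmod"
  assumes kmod: "is_kmod T"
begin

sublocale G: comm_group "additive_group T"
  by (rule comm_group_additive_group[OF kmod])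

lemma add_closed[simp,intro]: "x \<in> kcarrier T \<Longrightarrow> y \<in> kcarrier T \<Longrightarrow>
  kadd T x y \<in> kcarrier T"
  using G.m_closed by simp
lemma zero_closed[simp,intro]: "kzero T \<in> kcarrier T"
  using is_kmodD[OF kmod] by blast
lemma smult_closed[simp,intro]: "x \<in> kcarrier T \<Longrightarrow> ksmult T c x \<in> kcarrier T"
  using is_kmodD[OF kmod] by blast
lemma smult_add_right: "x \<in> kcarrier T \<Longrightarrow> y \<in> kcarrier T \<Longrightarrow>
  ksmult T c (kadd T x y) = kadd T (ksmult T c x) (ksmult T c y)"
  using is_kmodD[OF kmod] by blast
lemma smult_add_left: "x \<in> kcarrier T \<Longrightarrow> ksmult T (c + d) x = kadd T (ksmult T c x) (ksmult T d x)"
  using is_kmodD[OF kmod] by blast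
lemma smult_smult: "x \<in> kcarrier T \<Longrightarrow> ksmult T c (ksmult T d x) = ksmult T (c * d) x"
  using is_kmodD(10)[OF kmod] by simp
lemma smult_one[simp]: "x \<in> kcarrier T \<Longrightarrow> ksmult T 1 x = x"
  using is_kmodD(11)[OF kmod] by simp
lemma smult_comm: "x \<in> kcarrier T \<Longrightarrow> ksmult T c (ksmult T d x) = ksmult T d (ksmult T c x)"
  by (simp add: smult_smult mult.commute)

lemma r_zero[simp]: "x \<in> kcarrier T \<Longrightarrow> kadd T x (kzero T) = x"
  using G.r_one[of x] by simp
lemma inv_closed[simp,intro]: "x \<in> kcarrier T \<Longrightarrow> inv\<^bsub>additive_group T\<^esub> x \<in> kcarrier T"
  using G.inv_closed[of x] by simp
lemma r_inv[simp]: "x \<in> kcarrier T \<Longrightarrow> kadd T x (inv\<^bsub>additive_group T\<^esub> x) = kzero T"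
  using G.r_inv[of x] by simp
lemma l_inv[simp]: "x \<in> kcarrier T \<Longrightarrow> kadd T (inv\<^bsub>additive_group T\<^esub> x) x = kzero T"
  using G.l_inv[of x] by simp
lemma add_assoc: "x \<in> kcarrier T \<Longrightarrow> y \<in> kcarrier T \<Longrightarrow>
  z \<in> kcarrier T \<Longrightarrow> kadd T (kadd T x y) z = kadd T x (kadd T y z)"
  using G.m_assoc[of x y z] by simp
lemma add_lcomm: "x \<in> kcarrier T \<Longrightarrow> y \<in> kcarrier T \<Longrightarrow>
  z \<in> kcarrier T \<Longrightarrow> kadd T x (kadd T y z) = kadd T y (kadd T x z)"
  using G.m_lcomm[of x y z] by simp
lemma inv_add: "x \<in> kcarrier T \<Longrightarrow> y \<in> kcarrier T \<Longrightarrow>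
  inv\<^bsub>additive_group T\<^esub> (kadd T x y)
  = kadd T (inv\<^bsub>additive_group T\<^esub> x) (inv\<^bsub>additive_group T\<^esub> y)"
  using G.inv_mult[of x y] G.m_comm by simp
lemma add_eq_zero_inv: "x \<in> kcarrier T \<Longrightarrow> y \<in> kcarrier T \<Longrightarrow>
  kadd T x y = kzero T \<Longrightarrow> x = inv\<^bsub>additive_group T\<^esub> y"
  using G.inv_equality[of x y] by simp

lemma add_inv_inv_eq_zero: "x \<in> kcarrier T \<Longrightarrow> y \<in> kcarrier T \<Longrightarrow>
   kadd T (kadd T (kadd T x y) (inv\<^bsub>additive_group T\<^esub> x)) (inv\<^bsub>additive_group T\<^esub> y) = kzero T"
proof -
  assume x: "x \<in> kcarrier T" and y: "y \<in> kcarrier T"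
  have "kadd T (kadd T (kadd T x y) (inv\<^bsub>additive_group T\<^esub> x)) (inv\<^bsub>additive_group T\<^esub> y)
     = kadd T (kadd T x y) (kadd T (inv\<^bsub>additive_group T\<^esub> x) (inv\<^bsub>additive_group T\<^esub> y))"
    using x y by (simp add: add_assoc)
  also have "\<dots> = kadd T (kadd T x y) (inv\<^bsub>additive_group T\<^esub> (kadd T x y))" using x y by (simp add: inv_add)
  also have "\<dots> = kzero T" using x y by simp
  finally show ?thesis .
qed

lemma smult_zero[simp]: "ksmult T c (kzero T) = kzero T"
proof -
  have "ksmult T c (kzero T) = kadd T (ksmult T c (kzero T)) (ksmult T c (kzero T))"
    using smult_add_right[of "kzero T" "kzero T" c] G.l_one[of "kzero T"] by simp
  then show ?thesis using G.r_one G.l_cancel_one' smult_closed zero_closed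
    by (metis additive_group_simps)
qed

lemma smult_0[simp]: "x \<in> kcarrier T \<Longrightarrow> ksmult T 0 x = kzero T"
proof -
  assume x: "x \<in> kcarrier T"
  have "ksmult T 0 x = kadd T (ksmult T 0 x) (ksmult T 0 x)"
    using smult_add_left[OF x, of 0 0] by simp
  then show ?thesis using G.l_cancel_one' smult_closed x
    by (metis additive_group_simps)
qed

lemma smult_neg: "x \<in> kcarrier T \<Longrightarrow> ksmult T (- c) x = inv\<^bsub>additive_group T\<^esub> (ksmult T c x)"
proof -
  assume x: "x \<in> kcarrier T"
  have "kadd T (ksmult T (-c) x) (ksmult T c x) = kzero T"
    using smult_add_left[OF x, of "-c" c] x by simp
  then show ?thesis using x G.inv_equality[of "ksmult T (-c) x" "ksmult T c x"]
    by simp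
qed

lemma smult_of_int: "x \<in> kcarrier T \<Longrightarrow> ksmult T (of_int n) x = x [^]\<^bsub>additive_group T\<^esub> n"
proof (induction n rule: int_induct[where k=0])
  case base
  then show ?case by simp
next
  case (step1 i)
  then show ?case using smult_add_left[of x "of_int i" 1] G.int_pow_mult[of x i 1]
    by simp
next
  case (step2 i)
  have "ksmult T (of_int (i - 1)) x = kadd T (ksmult T (of_int i) x) (ksmult T (-1) x)"
    using smult_add_left[of x "of_int i" "-1"] step2 by simp
  then show ?case using step2 smult_neg[of x 1] G.int_pow_diff[of x i 1] G.int_pow_1
    by (simp add: G.int_pow_neg)
qed

lemma fold_graph_finprod:
  assumes "fold_graph (\<lambda>q acc. kadd T (g q) acc) (kzero T) S y" "g \<in> S \<rightarrow> kcarrier T"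
  shows "y = finprod (additive_group T) g S"
  using assms
proof (induction rule: fold_graph.induct)
  case emptyI then show ?case by simp
next
  case (insertI x A y)
  from insertI(2) have "finite A" by (induction rule: fold_graph.induct) auto
  with insertI show ?case by (simp add: Pi_iff)
qed

lemma ksum_eq_finprod:
  assumes "finite S" "g \<in> S \<rightarrow> kcarrier T"
  shows "ksum T g S = finprod (additive_group T) g S"
proof -
  obtain y where y: "fold_graph (\<lambda>q acc. kadd T (g q) acc) (kzero T) S y"
    using finite_imp_fold_graph[OF assms(1), of "\<lambda>q acc. kadd T (g q) acc" "kzero T"] by blast
  have "(THE y. fold_graph (\<lambda>q acc. kadd T (g q) acc) (kzero T) S y) = finprod (additive_group T) g S"
    using y fold_graph_finprod[OF _ assms(2)] by (metis theI)
  then show ?thesis using assms(1) unfolding ksum_def Finite_Set.fold_def by simp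
qed

end

section \<open>Finitely supported integer functions\<close>

definition supp :: "('p \<Rightarrow> int) \<Rightarrow> 'p set" where
  "supp f = {q. f q \<noteq> 0}"

lemma tfree_iff: "f \<in> tfree M N \<longleftrightarrow> finite (supp f) \<and>
  supp f \<subseteq> kcarrier M \<times> kcarrier N"
  by (simp add: tfree_def supp_def)

lemma supp_add: "supp (\<lambda>q. f q + g q) \<subseteq> supp f \<union> supp g"
  by (auto simp: supp_def)
lemma supp_diff: "supp (\<lambda>q. f q - g q) \<subseteq> supp f \<union> supp g"
  by (auto simp: supp_def)
lemma supp_scale: "supp (\<lambda>q. n * f q) \<subseteq> supp f"
  by (auto simp: supp_def)
lemma supp_delta: "supp (delta p) = {p}"
  by (auto simp: supp_def delta_def)
lemma supp_zero: "supp (\<lambda>_. 0) = {}"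
  by (auto simp: supp_def)

lemma tfree_zero[simp,intro]: "(\<lambda>_. 0) \<in> tfree M N"
  by (simp add: tfree_iff supp_zero)
lemma tfree_finite_supp: "f \<in> tfree M N \<Longrightarrow> finite (supp f)"
  by (simp add: tfree_iff)

lemma tfree_add[intro]: "f \<in> tfree M N \<Longrightarrow> g \<in> tfree M N \<Longrightarrow>
  (\<lambda>q. f q + g q) \<in> tfree M N"
  unfolding tfree_iff using supp_add[of f g] by (meson finite_Un finite_subset le_sup_iff subset_trans)
lemma tfree_diff[intro]: "f \<in> tfree M N \<Longrightarrow> g \<in> tfree M N \<Longrightarrow>
  (\<lambda>q. f q - g q) \<in> tfree M N"
  unfolding tfree_iff using supp_diff[of f g] by (meson finite_Un finite_subset le_sup_iff subset_trans)
lemma tfree_scale[intro]: "f \<in> tfree M N \<Longrightarrow> (\<lambda>q. n * f q) \<in> tfree M N"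
  unfolding tfree_iff using supp_scale[of n f] by (meson finite_subset subset_trans)
lemma tfree_delta[intro]: "p \<in> kcarrier M \<times> kcarrier N \<Longrightarrow> delta p \<in> tfree M N"
  unfolding tfree_iff supp_delta by simp

lemma zspan_add: "f \<in> zspan S \<Longrightarrow> g \<in> zspan S \<Longrightarrow> (\<lambda>q. f q + g q) \<in> zspan S"
proof -
  assume f: "f \<in> zspan S" and g: "g \<in> zspan S"
  have "(\<lambda>q. (0::int) - g q) \<in> zspan S" using zspan_diff[OF zspan_zero g] .
  from zspan_diff[OF f this] show ?thesis by simp
qed
lemma zspan_neg: "g \<in> zspan S \<Longrightarrow> (\<lambda>q. - g q) \<in> zspan S"
  using zspan_diff[OF zspan_zero, of g S] by simp
lemma zspan_scale: "f \<in> zspan S \<Longrightarrow> (\<lambda>q. n * f q) \<in> zspan S"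
proof (induction n rule: int_induct[where k=0])
  case base then show ?case using zspan_zero by simp
next
  case (step1 i)
  then have "(\<lambda>q. i * f q + f q) \<in> zspan S" using zspan_add by blast
  then show ?case by (simp add: algebra_simps)
next
  case (step2 i)
  then have "(\<lambda>q. i * f q - f q) \<in> zspan S" using zspan_diff by blast
  then show ?case by (simp add: algebra_simps)
qed
lemma zspan_subset: "S \<subseteq> tfree M N \<Longrightarrow> zspan S \<subseteq> tfree M N"
proof
  fix f assume S: "S \<subseteq> tfree M N" and f: "f \<in> zspan S"
  from f S show "f \<in> tfree M N" by (induction rule: zspan.induct) auto
qed

lemma zspan_map:
  assumes "\<And>s. s \<in> S \<Longrightarrow> F s \<in> zspan S'" "F (\<lambda>_. 0) \<in> zspan S'"
   "\<And>f g. f \<in> zspan S \<Longrightarrow> g \<in> zspan S \<Longrightarrow>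
       F (\<lambda>q. f q - g q) = (\<lambda>q. F f q - F g q)"
   "f \<in> zspan S"
  shows "F f \<in> zspan S'"
  using assms(4)
proof (induction rule: zspan.induct)
  case zspan_zero then show ?case using assms(2) .
next
  case (zspan_gen s) then show ?case using assms(1) by blast
next
  case (zspan_diff f g) then show ?case using assms(3) zspan.zspan_diff by metis
qed

lemma fpush_eq_sum:
  assumes "finite S" "supp f \<subseteq> S"
  shows "fpush \<phi> f r = (\<Sum>q\<in>{q\<in>S. \<phi> q = r}. f q)"
  unfolding fpush_def
  by (rule sum.mono_neutral_left) (use assms in \<open>auto simp: supp_def\<close>)

lemma fpush_lincomb:
  assumes "finite (supp f)" "finite (supp g)"
  shows "fpush \<phi> (\<lambda>q. a * f q + b * g q) = (\<lambda>r. a * fpush \<phi> f r + b * fpush \<phi> g r)"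
proof
  fix r
  let ?S = "supp f \<union> supp g"
  have S: "finite ?S" using assms by simp
  have "supp (\<lambda>q. a * f q + b * g q) \<subseteq> ?S" by (auto simp: supp_def)
  then show "fpush \<phi> (\<lambda>q. a * f q + b * g q) r = a * fpush \<phi> f r + b * fpush \<phi> g r"
    using fpush_eq_sum[OF S, of "\<lambda>q. a * f q + b * g q" \<phi> r] fpush_eq_sum[OF S, of f \<phi> r]
        fpush_eq_sum[OF S, of g \<phi> r]
    by (simp add: sum.distrib sum_distrib_left)
qed

lemma fpush_add: "finite (supp f) \<Longrightarrow> finite (supp g) \<Longrightarrow>
    fpush \<phi> (\<lambda>q. f q + g q) = (\<lambda>r. fpush \<phi> f r + fpush \<phi> g r)"
  using fpush_lincomb[of f g \<phi> 1 1] by simp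
lemma fpush_diff: "finite (supp f) \<Longrightarrow> finite (supp g) \<Longrightarrow>
    fpush \<phi> (\<lambda>q. f q - g q) = (\<lambda>r. fpush \<phi> f r - fpush \<phi> g r)"
  using fpush_lincomb[of f g \<phi> 1 "-1"] by simp
lemma fpush_scale: "finite (supp f) \<Longrightarrow>
    fpush \<phi> (\<lambda>q. n * f q) = (\<lambda>r. n * fpush \<phi> f r)"
  using fpush_lincomb[of f f \<phi> n 0] by simp
lemma fpush_delta: "fpush \<phi> (delta p) = delta (\<phi> p)"
proof
  fix r
  have "fpush \<phi> (delta p) r = (\<Sum>q\<in>{q\<in>{p}. \<phi> q = r}. delta p q)"
    by (rule fpush_eq_sum) (auto simp: supp_delta)
  moreover have "{q\<in>{p}. \<phi> q = r} = (if \<phi> p = r then {p} else {})" by auto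
  ultimately show "fpush \<phi> (delta p) r = delta (\<phi> p) r"
    by (simp add: delta_def)
qed
lemma fpush_zero: "fpush \<phi> (\<lambda>_. 0) = (\<lambda>_. 0)"
  by (simp add: fpush_def)
lemma supp_fpush: "supp (fpush \<phi> f) \<subseteq> \<phi> ` supp f"
proof
  fix r assume r: "r \<in> supp (fpush \<phi> f)"
  show "r \<in> \<phi> ` supp f"
  proof (cases "{q. f q \<noteq> 0 \<and> \<phi> q = r} = {}")
    case True
    have "fpush \<phi> f r = (\<Sum>q\<in>{q. f q \<noteq> 0 \<and> \<phi> q = r}. f q)" by (simp add: fpush_def)
    also have "\<dots> = 0" unfolding True by simp
    finally have "fpush \<phi> f r = 0" .
    then show ?thesis using r by (simp add: supp_def)
  next
    case False
    then obtain q where "f q \<noteq> 0" "\<phi> q = r" by blast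
    then show ?thesis by (auto simp: supp_def)
  qed
qed
lemma fpush_cong: "(\<And>q. q \<in> supp f \<Longrightarrow> \<phi> q = \<psi> q) \<Longrightarrow>
  fpush \<phi> f = fpush \<psi> f"
  unfolding fpush_def supp_def by (intro ext sum.cong) auto
lemma fpush_id: "finite (supp f) \<Longrightarrow> fpush (\<lambda>q. q) f = f"
proof
  fix r assume "finite (supp f)"
  have "fpush (\<lambda>q. q) f r = (\<Sum>q\<in>{q\<in>insert r (supp f). q = r}. f q)"
    by (rule fpush_eq_sum) (use \<open>finite (supp f)\<close> in auto)
  also have "{q\<in>insert r (supp f). q = r} = {r}" by auto
  finally show "fpush (\<lambda>q. q) f r = f r" by simp
qed
lemma fpush_comp:
  assumes "finite (supp f)"
  shows "fpush \<psi> (fpush \<phi> f) = fpush (\<lambda>q. \<psi> (\<phi> q)) f"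
proof
  fix r
  let ?S = "supp f"
  have fin: "finite (\<phi> ` ?S)" using assms by simp
  have "fpush \<psi> (fpush \<phi> f) r = (\<Sum>r'\<in>{r'\<in>\<phi> ` ?S. \<psi> r' = r}. fpush \<phi> f r')"
    by (rule fpush_eq_sum[OF fin supp_fpush])
  also have "\<dots> = (\<Sum>r'\<in>{r'\<in>\<phi> ` ?S. \<psi> r' = r}. \<Sum>q\<in>{q\<in>{q\<in>?S. \<psi> (\<phi> q)
      = r}. \<phi> q = r'}. f q)"
  proof (rule sum.cong[OF refl])
    fix r' assume "r' \<in> {r'\<in>\<phi> ` ?S. \<psi> r' = r}"
    then have e: "{q\<in>{q\<in>?S. \<psi> (\<phi> q) = r}. \<phi> q = r'} = {q\<in>?S. \<phi> q = r'}" by auto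
    show "fpush \<phi> f r' = (\<Sum>q\<in>{q\<in>{q\<in>?S. \<psi> (\<phi> q) = r}. \<phi> q = r'}. f q)"
      unfolding e by (rule fpush_eq_sum[OF assms order_refl])
  qed
  also have "\<dots> = (\<Sum>q\<in>{q\<in>?S. \<psi> (\<phi> q) = r}. f q)"
    by (rule sum.group) (use assms in \<open>auto\<close>)
  also have "\<dots> = fpush (\<lambda>q. \<psi> (\<phi> q)) f r"
    by (rule fpush_eq_sum[symmetric, OF assms order_refl])
  finally show "fpush \<psi> (fpush \<phi> f) r = fpush (\<lambda>q. \<psi> (\<phi> q)) f r" .
qed

lemma tfree_fpush: "f \<in> tfree M N \<Longrightarrow>
  (\<And>q. q \<in> kcarrier M \<times> kcarrier N \<Longrightarrow> \<phi> q \<in> kcarrier M' \<times> kcarrier N')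
  \<Longrightarrow>
   fpush \<phi> f \<in> tfree M' N'"
proof -
  assume f: "f \<in> tfree M N" and \<phi>: "\<And>q. q \<in> kcarrier M \<times> kcarrier N \<Longrightarrow>
      \<phi> q \<in> kcarrier M' \<times> kcarrier N'"
  have "finite (\<phi> ` supp f)" using f by (simp add: tfree_iff)
  then have "finite (supp (fpush \<phi> f))" using supp_fpush[of \<phi> f] finite_subset by blast
  moreover have "\<phi> ` supp f \<subseteq> kcarrier M' \<times> kcarrier N'"
  proof
    fix r assume "r \<in> \<phi> ` supp f"
    then obtain q where q: "q \<in> supp f" "r = \<phi> q" by blast
    then have "q \<in> kcarrier M \<times> kcarrier N" using f by (auto simp: tfree_iff)
    then show "r \<in> kcarrier M' \<times> kcarrier N'" using q \<phi>[of q] by simp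
  qed
  ultimately show ?thesis using supp_fpush[of \<phi> f] by (simp add: tfree_iff)
qed

lemma tfree_induct[consumes 1, case_names zero step]:
  assumes "f \<in> tfree M N" "P (\<lambda>_. 0)"
    "\<And>f p n. f \<in> tfree M N \<Longrightarrow> p \<in> kcarrier M \<times> kcarrier N \<Longrightarrow>
        f p = 0 \<Longrightarrow> P f \<Longrightarrow> P (\<lambda>q. f q + n * delta p q)"
  shows "P f"
proof -
  have "\<forall>f. f \<in> tfree M N \<longrightarrow> card (supp f) = k \<longrightarrow> P f" for k
  proof (induction k)
    case 0
    show ?case
    proof (intro allI impI)
      fix f assume f: "f \<in> tfree M N" "card (supp f) = 0"
      then have "supp f = {}" by (simp add: tfree_iff)
      then have "f = (\<lambda>_. 0)" by (auto simp: supp_def)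
      then show "P f" using assms(2) by simp
    qed
  next
    case (Suc k)
    show ?case
    proof (intro allI impI)
      fix f assume f: "f \<in> tfree M N" "card (supp f) = Suc k"
      then have "supp f \<noteq> {}" by auto
      then obtain p where p: "p \<in> supp f" by blast
      define f' where "f' = (\<lambda>q. if q = p then 0 else f q)"
      have sf': "supp f' = supp f - {p}" by (auto simp: supp_def f'_def)
      have f'T: "f' \<in> tfree M N" using f by (auto simp: tfree_iff sf')
      have "card (supp f') = k" using f p by (simp add: sf' tfree_iff)
      then have "P f'" using Suc f'T by blast
      moreover have "p \<in> kcarrier M \<times> kcarrier N" using f p by (auto simp: tfree_iff)
      moreover have "f' p = 0" by (simp add: f'_def)
      ultimately have "P (\<lambda>q. f' q + f p * delta p q)" using assms(3) f'T by blast
      moreover have "(\<lambda>q. f' q + f p * delta p q) = f" by (auto simp: f'_def delta_def)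
      ultimately show "P f" by simp
    qed
  qed
  then show ?thesis using assms(1) by blast
qed

section \<open>Balanced tensor products\<close>

lemma trelsE[consumes 1, case_names add_left add_right balanced]:
  assumes "s \<in> trels M N Bal"
  obtains m m' n where "m \<in> kcarrier M" "m' \<in> kcarrier M" "n \<in> kcarrier N"
      "s = (\<lambda>q. delta (kadd M m m', n) q - delta (m, n) q - delta (m', n) q)"
  | m n n' where "m \<in> kcarrier M" "n \<in> kcarrier N" "n' \<in> kcarrier N"
      "s = (\<lambda>q. delta (m, kadd N n n') q - delta (m, n) q - delta (m, n') q)"
  | p p' where "(p, p') \<in> Bal" "s = (\<lambda>q. delta p q - delta p' q)"
  using assms unfolding trels_def by blast

locale balanced_tensor = M: kmodule M + N: kmodule N
  for M :: "('a, 'k::comm_ring_1) kmod" and N :: "('b, 'k) kmod" +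
  fixes Bal :: "(('a \<times> 'b) \<times> ('a \<times> 'b)) set"
  assumes Bal_carr: "Bal \<subseteq> (kcarrier M \<times> kcarrier N) \<times> (kcarrier M \<times> kcarrier N)"
    \<comment> \<open>makes the k-action through the left factor well defined on the quotient\<close>
    and Bal_smult: "(p, p') \<in> Bal \<Longrightarrow>
        ((ksmult M c (fst p), snd p), (ksmult M c (fst p'), snd p')) \<in> Bal"
begin

abbreviation "Free \<equiv> tfree M N"
abbreviation "Rel \<equiv> zspan (trels M N Bal)"
abbreviation "cls \<equiv> tcls M N Bal"
abbreviation "Tens \<equiv> tensor M N Bal"
abbreviation "Pairs \<equiv> kcarrier M \<times> kcarrier N"

lemma trels_tfree: "trels M N Bal \<subseteq> Free"
  unfolding trels_def using Bal_carr by (auto intro!: tfree_diff tfree_delta)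

lemma Rel_tfree: "f \<in> Rel \<Longrightarrow> f \<in> Free"
  using zspan_subset[OF trels_tfree] by blast

lemma rel_add_left: "m \<in> kcarrier M \<Longrightarrow> m' \<in> kcarrier M \<Longrightarrow>
  n \<in> kcarrier N \<Longrightarrow>
  (\<lambda>q. delta (kadd M m m', n) q - delta (m, n) q - delta (m', n) q) \<in> Rel"
  by (rule zspan_gen, unfold trels_def, rule UnI1, rule UnI1) blast
lemma rel_add_right: "m \<in> kcarrier M \<Longrightarrow> n \<in> kcarrier N \<Longrightarrow>
  n' \<in> kcarrier N \<Longrightarrow>
  (\<lambda>q. delta (m, kadd N n n') q - delta (m, n) q - delta (m, n') q) \<in> Rel"
  by (rule zspan_gen, unfold trels_def, rule UnI1, rule UnI2) blast
lemma rel_balanced: "(p, p') \<in> Bal \<Longrightarrow> (\<lambda>q. delta p q - delta p' q) \<in> Rel"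
  by (rule zspan_gen, unfold trels_def, rule UnI2) blast

lemma cls_mem: "f \<in> Free \<Longrightarrow> f \<in> cls f"
  by (simp add: tcls_def zspan_zero)

lemma cls_eq_iff: "f \<in> Free \<Longrightarrow> g \<in> Free \<Longrightarrow>
  cls f = cls g \<longleftrightarrow> (\<lambda>q. f q - g q) \<in> Rel"
proof
  assume "f \<in> Free" "g \<in> Free" "cls f = cls g"
  then show "(\<lambda>q. f q - g q) \<in> Rel" using cls_mem[of f] by (simp add: tcls_def)
next
  assume fg: "f \<in> Free" "g \<in> Free" "(\<lambda>q. f q - g q) \<in> Rel"
  show "cls f = cls g"
  proof (unfold tcls_def, intro Collect_cong conj_cong refl iffI)
    fix h assume "(\<lambda>q. h q - f q) \<in> Rel"
    from zspan_add[OF this fg(3)] show "(\<lambda>q. h q - g q) \<in> Rel" by simp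
  next
    fix h assume "(\<lambda>q. h q - g q) \<in> Rel"
    from zspan_diff[OF this fg(3)] show "(\<lambda>q. h q - f q) \<in> Rel" by simp
  qed
qed

lemma cls_eqI: "f \<in> Free \<Longrightarrow> g \<in> Free \<Longrightarrow>
  (\<lambda>q. f q - g q) \<in> Rel \<Longrightarrow> cls f = cls g"
  using cls_eq_iff by blast

lemma trep_cls: assumes "f \<in> Free" shows "trep (cls f) \<in> Free" "(\<lambda>q. trep (cls f) q - f q) \<in> Rel"
proof -
  have "trep (cls f) \<in> cls f" unfolding trep_def using cls_mem[OF assms] by (metis someI)
  then show "trep (cls f) \<in> Free" "(\<lambda>q. trep (cls f) q - f q) \<in> Rel" by (auto simp: tcls_def)
qed

lemma cls_trep: "f \<in> Free \<Longrightarrow> cls (trep (cls f)) = cls f"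
  using trep_cls cls_eqI by blast

lemma carrier_tensor: "kcarrier Tens = cls ` Free"
  by (simp add: tensor_def)

lemma carrier_tensorE: assumes "t \<in> kcarrier Tens" obtains f where "f \<in> Free" "t = cls f"
  using assms carrier_tensor by auto

lemma carrier_trep: "t \<in> kcarrier Tens \<Longrightarrow> trep t \<in> Free \<and> cls (trep t) = t"
  by (metis carrier_tensorE cls_trep trep_cls(1))

lemma cls_in[simp,intro]: "f \<in> Free \<Longrightarrow> cls f \<in> kcarrier Tens"
  by (simp add: carrier_tensor)

lemma tensor_add_cls: "f \<in> Free \<Longrightarrow> g \<in> Free \<Longrightarrow>
  kadd Tens (cls f) (cls g) = cls (\<lambda>q. f q + g q)"
proof -
  assume f: "f \<in> Free" and g: "g \<in> Free"
  have "kadd Tens (cls f) (cls g) = cls (\<lambda>q. trep (cls f) q + trep (cls g) q)" by (simp add: tensor_def)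
  also have "\<dots> = cls (\<lambda>q. f q + g q)"
  proof (rule cls_eqI)
    show "(\<lambda>q. trep (cls f) q + trep (cls g) q) \<in> Free" using trep_cls f g by blast
    show "(\<lambda>q. f q + g q) \<in> Free" using f g by blast
    have "(\<lambda>q. (trep (cls f) q - f q) + (trep (cls g) q - g q)) \<in> Rel"
      using zspan_add trep_cls(2) f g by blast
    then show "(\<lambda>q. trep (cls f) q + trep (cls g) q - (f q + g q)) \<in> Rel" by (simp add: algebra_simps)
  qed
  finally show ?thesis .
qed

lemma tensor_zero_cls: "kzero Tens = cls (\<lambda>_. 0)"
  by (simp add: tensor_def)

definition smult_fst :: "'k \<Rightarrow> 'a \<times> 'b \<Rightarrow> 'a \<times> 'b" where
  "smult_fst c = (\<lambda>(m, n). (ksmult M c m, n))"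

lemma smult_fst_Pairs: "q \<in> Pairs \<Longrightarrow> smult_fst c q \<in> Pairs"
  by (auto simp: smult_fst_def)

lemma fpush_delta_diff3: "fpush \<phi> (\<lambda>q. delta a q - delta b q - delta c q)
  = (\<lambda>q. delta (\<phi> a) q - delta (\<phi> b) q - delta (\<phi> c) q)"
proof -
  have "fpush \<phi> (\<lambda>q. delta a q - delta b q - delta c q)
      = (\<lambda>r. fpush \<phi> (\<lambda>q. delta a q - delta b q) r - fpush \<phi> (delta c) r)"
    by (rule fpush_diff) (auto simp: supp_delta intro: finite_subset[OF supp_diff])
  then show ?thesis by (simp add: fpush_diff supp_delta fpush_delta)
qed

lemma smult_fst_apply[simp]: "smult_fst c (m, n) = (ksmult M c m, n)"
  by (simp add: smult_fst_def)

lemma fpush_smult_fst_Rel: assumes "f \<in> Rel" shows "fpush (smult_fst c) f \<in> Rel"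
proof (rule zspan_map[OF _ _ _ assms])
  show "fpush (smult_fst c) (\<lambda>_. 0) \<in> Rel" by (simp add: fpush_zero zspan_zero)
  fix f g assume "f \<in> Rel" "g \<in> Rel"
  then show "fpush (smult_fst c) (\<lambda>q. f q - g q) = (\<lambda>q. fpush (smult_fst c) f q - fpush (smult_fst c) g q)"
    using Rel_tfree by (intro fpush_diff) (auto simp: tfree_iff)
next
  fix s assume "s \<in> trels M N Bal"
  then show "fpush (smult_fst c) s \<in> Rel"
  proof (cases rule: trelsE)
    case (add_left m m' n)
    then show ?thesis
      using rel_add_left[of "ksmult M c m" "ksmult M c m'" n] by (simp add: fpush_delta_diff3 M.smult_add_right)
  next
    case (add_right m n n')
    then show ?thesis
      using rel_add_right[of "ksmult M c m" n n'] by (simp add: fpush_delta_diff3)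
  next
    case (balanced p p')
    have "(smult_fst c p, smult_fst c p') \<in> Bal"
      using Bal_smult[OF balanced(1), of c] by (simp add: smult_fst_def split_beta)
    then show ?thesis
      using balanced rel_balanced by (simp add: fpush_diff supp_delta fpush_delta)
  qed
qed

lemma tensor_smult_cls: assumes "f \<in> Free" shows "ksmult Tens c (cls f) = cls (fpush (smult_fst c) f)"
proof -
  have "ksmult Tens c (cls f) = cls (fpush (smult_fst c) (trep (cls f)))"
    by (simp add: tensor_def smult_fst_def case_prod_beta)
  also have "\<dots> = cls (fpush (smult_fst c) f)"
  proof (rule cls_eqI)
    show "fpush (smult_fst c) (trep (cls f)) \<in> Free" using trep_cls(1)[OF assms] by (rule tfree_fpush) (rule smult_fst_Pairs)
    show "fpush (smult_fst c) f \<in> Free" using assms by (rule tfree_fpush) (rule smult_fst_Pairs)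
    have "fpush (smult_fst c) (\<lambda>q. trep (cls f) q - f q) \<in> Rel" using fpush_smult_fst_Rel trep_cls(2)[OF assms]
        by blast
    moreover have "fpush (smult_fst c) (\<lambda>q. trep (cls f) q - f q)
        = (\<lambda>q. fpush (smult_fst c) (trep (cls f)) q - fpush (smult_fst c) f q)"
      using assms trep_cls(1)[OF assms] by (intro fpush_diff) (auto simp: tfree_iff)
    ultimately show "(\<lambda>q. fpush (smult_fst c) (trep (cls f)) q - fpush (smult_fst c) f q) \<in> Rel" by simp
  qed
  finally show ?thesis .
qed

lemma fpush_smult_fst_tfree: "f \<in> Free \<Longrightarrow> fpush (smult_fst c) f \<in> Free"
  by (rule tfree_fpush) (auto intro: smult_fst_Pairs)

lemma fpush_smult_fst_add_Rel:
  assumes "f \<in> Free"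
  shows "(\<lambda>q. fpush (smult_fst (c + d)) f q - (fpush (smult_fst c) f q + fpush (smult_fst d) f q)) \<in> Rel"
  using assms
proof (induction rule: tfree_induct)
  case zero then show ?case by (simp add: fpush_zero zspan_zero)
next
  case (step f p n)
  obtain m n' where p: "p = (m, n')" "m \<in> kcarrier M" "n' \<in> kcarrier N" using step(2) by auto
  have ff: "finite (supp f)" using step(1) by (simp add: tfree_iff)
  have fd: "finite (supp (\<lambda>q. n * delta p q))" using supp_scale[of n "delta p"] by (simp add: supp_delta finite_subset)
  have e: "fpush \<phi> (\<lambda>q. f q + n * delta p q) = (\<lambda>r. fpush \<phi> f r + n * delta (\<phi> p) r)" for \<phi>
    using fpush_add[OF ff fd, of \<phi>] fpush_scale[of "delta p" \<phi> n] by (simp add: supp_delta fpush_delta)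
  have r: "(\<lambda>q. n * (delta (kadd M (ksmult M c m) (ksmult M d m), n') q - delta (ksmult M c m, n') q - delta
      (ksmult M d m, n') q)) \<in> Rel"
    using zspan_scale[OF rel_add_left] p by blast
  have "(\<lambda>q. (fpush (smult_fst (c + d)) f q - (fpush (smult_fst c) f q + fpush (smult_fst d) f q)) +
     n * (delta (kadd M (ksmult M c m) (ksmult M d m), n') q - delta (ksmult M c m, n') q - delta (ksmult M d
         m, n') q)) \<in> Rel"
    using zspan_add[OF step(4) r] .
  moreover have "(\<lambda>q. fpush (smult_fst (c + d)) (\<lambda>q. f q + n * delta p q) q -
      (fpush (smult_fst c) (\<lambda>q. f q + n * delta p q) q + fpush (smult_fst d) (\<lambda>q. f q + n * delta p q) q))
    = (\<lambda>q. (fpush (smult_fst (c + d)) f q - (fpush (smult_fst c) f q + fpush (smult_fst d) f q)) +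
     n * (delta (kadd M (ksmult M c m) (ksmult M d m), n') q - delta (ksmult M c m, n') q - delta (ksmult M d m, n') q))"
    unfolding e unfolding p(1) smult_fst_apply M.smult_add_left[OF p(2)] by (simp add: algebra_simps)
  ultimately show ?case by simp
qed

lemma fpush_smult_fst_mult:
  assumes "f \<in> Free"
  shows "fpush (smult_fst (c * d)) f = fpush (smult_fst c) (fpush (smult_fst d) f)"
proof -
  have "fpush (smult_fst c) (fpush (smult_fst d) f) = fpush (\<lambda>q. smult_fst c (smult_fst d q)) f"
    using assms by (intro fpush_comp) (simp add: tfree_iff)
  also have "\<dots> = fpush (smult_fst (c * d)) f"
    using assms by (intro fpush_cong) (auto simp: tfree_iff smult_fst_def M.smult_smult)
  finally show ?thesis by simp
qed

lemma fpush_smult_fst_one: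
  assumes "f \<in> Free"
  shows "fpush (smult_fst 1) f = f"
proof -
  have "fpush (smult_fst 1) f = fpush (\<lambda>q. q) f"
    using assms by (intro fpush_cong) (auto simp: tfree_iff smult_fst_def)
  then show ?thesis using fpush_id[of f] assms by (simp add: tfree_iff)
qed

lemma tensor_add_inverse:
  assumes "f \<in> Free"
  shows "kadd Tens (cls f) (cls (\<lambda>q. - f q)) = kzero Tens"
  using assms tfree_scale[OF assms, of "-1"] by (simp add: tensor_add_cls tensor_zero_cls)

lemma tensor_smult_add_left:
  assumes "f \<in> Free"
  shows "ksmult Tens (c + d) (cls f) = kadd Tens (ksmult Tens c (cls f)) (ksmult Tens d (cls f))"
  using assms fpush_smult_fst_add_Rel[OF assms, of c d]
  by (simp add: tensor_add_cls tensor_smult_cls fpush_smult_fst_tfree cls_eq_iff tfree_add)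

lemma is_kmod_tensor: "is_kmod Tens"
  unfolding is_kmod_def
proof (intro conjI ballI allI)
  fix x assume "x \<in> kcarrier Tens"
  then obtain f where f: "f \<in> Free" "x = cls f" by (rule carrier_tensorE)
  then show "\<exists>y\<in>kcarrier Tens. kadd Tens x y = kzero Tens"
    using tensor_add_inverse tfree_scale[OF f(1), of "-1"] by force
next
  fix c d x assume "x \<in> kcarrier Tens"
  then show "ksmult Tens (c + d) x = kadd Tens (ksmult Tens c x) (ksmult Tens d x)"
    by (auto elim!: carrier_tensorE simp: tensor_smult_add_left)
qed (auto elim!: carrier_tensorE
      simp: tensor_zero_cls tensor_add_cls tensor_smult_cls ac_simps
        tfree_add fpush_smult_fst_tfree fpush_add tfree_finite_supp fpush_smult_fst_one fpush_smult_fst_mult)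

sublocale T: kmodule Tens
  by (unfold_locales) (rule is_kmod_tensor)

lemma simple_in[simp,intro]: "m \<in> kcarrier M \<Longrightarrow> n \<in> kcarrier N \<Longrightarrow>
  tsimple M N Bal m n \<in> kcarrier Tens"
  unfolding tsimple_def by (rule cls_in) (simp add: tfree_delta)

lemma simple_add_l:
  assumes "m \<in> kcarrier M" "m' \<in> kcarrier M" "n \<in> kcarrier N"
  shows "tsimple M N Bal (kadd M m m') n = kadd Tens (tsimple M N Bal m n) (tsimple M N Bal m' n)"
proof -
  have "kadd Tens (tsimple M N Bal m n) (tsimple M N Bal m' n) = cls (\<lambda>q. delta (m, n) q + delta (m', n) q)"
    unfolding tsimple_def using assms by (simp add: tensor_add_cls tfree_delta)
  also have "\<dots> = cls (delta (kadd M m m', n))"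
    using assms rel_add_left[OF assms] by (intro cls_eqI) (auto intro!: tfree_add tfree_delta simp: algebra_simps zspan_neg
      dest: zspan_neg)
  finally show ?thesis by (simp add: tsimple_def)
qed

lemma simple_add_r:
  assumes "m \<in> kcarrier M" "n \<in> kcarrier N" "n' \<in> kcarrier N"
  shows "tsimple M N Bal m (kadd N n n') = kadd Tens (tsimple M N Bal m n) (tsimple M N Bal m n')"
proof -
  have "kadd Tens (tsimple M N Bal m n) (tsimple M N Bal m n') = cls (\<lambda>q. delta (m, n) q + delta (m, n') q)"
    unfolding tsimple_def using assms by (simp add: tensor_add_cls tfree_delta)
  also have "\<dots> = cls (delta (m, kadd N n n'))"
    using assms rel_add_right[OF assms] by (intro cls_eqI) (auto intro!: tfree_add tfree_delta simp: algebra_simps zspan_neg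
      dest: zspan_neg)
  finally show ?thesis by (simp add: tsimple_def)
qed

lemma simple_smult:
  assumes "m \<in> kcarrier M" "n \<in> kcarrier N"
  shows "ksmult Tens c (tsimple M N Bal m n) = tsimple M N Bal (ksmult M c m) n"
  unfolding tsimple_def using assms by (simp add: tensor_smult_cls tfree_delta fpush_delta)

lemma simple_bal:
  assumes "(p, p') \<in> Bal"
  shows "tsimple M N Bal (fst p) (snd p) = tsimple M N Bal (fst p') (snd p')"
proof -
  have "p \<in> Pairs" "p' \<in> Pairs" using assms Bal_carr by auto
  then show ?thesis unfolding tsimple_def using rel_balanced[OF assms] by (intro cls_eqI) (auto intro: tfree_delta)
qed

lemma simple_kbal:
  assumes "kbal M N \<subseteq> Bal" "m \<in> kcarrier M" "n \<in> kcarrier N"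
  shows "tsimple M N Bal (ksmult M c m) n = tsimple M N Bal m (ksmult N c n)"
proof -
  have "((ksmult M c m, n), (m, ksmult N c n)) \<in> Bal" using assms unfolding kbal_def by blast
  from simple_bal[OF this] show ?thesis by simp
qed

lemma simple_smult_r:
  assumes "kbal M N \<subseteq> Bal" "m \<in> kcarrier M" "n \<in> kcarrier N"
  shows "ksmult Tens c (tsimple M N Bal m n) = tsimple M N Bal m (ksmult N c n)"
  using simple_smult[OF assms(2,3)] simple_kbal[OF assms] by simp

lemma cls_scale_delta:
  assumes p: "p \<in> Pairs"
  shows "cls (\<lambda>q. n * delta p q) = cls (delta p) [^]\<^bsub>additive_group Tens\<^esub> n"
proof (induction n rule: int_induct[where k=0])
  case base
  then show ?case using tensor_zero_cls by simp
next
  case (step1 i)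
  have "cls (\<lambda>q. (i + 1) * delta p q) = cls (\<lambda>q. i * delta p q + delta p q)" by (simp add: algebra_simps)
  also have "\<dots> = kadd Tens (cls (\<lambda>q. i * delta p q)) (cls (delta p))"
    using p by (simp add: tensor_add_cls tfree_delta tfree_scale)
  also have "\<dots> = cls (delta p) [^]\<^bsub>additive_group Tens\<^esub> (i + 1)"
    using step1 p T.G.int_pow_mult[of "cls (delta p)" i 1] by (simp add: tfree_delta)
  finally show ?case .
next
  case (step2 i)
  have dp: "(\<lambda>q. - delta p q) \<in> Free" using tfree_scale[OF tfree_delta[OF p], of "-1"] by simp
  have inv: "cls (\<lambda>q. - delta p q) = inv\<^bsub>additive_group Tens\<^esub> (cls (delta p))"
  proof -
    have "kadd Tens (cls (\<lambda>q. - delta p q)) (cls (delta p)) = kzero Tens"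
      using p dp by (simp add: tensor_add_cls tfree_delta tensor_zero_cls)
    then show ?thesis using T.add_eq_zero_inv dp p by (simp add: tfree_delta)
  qed
  have "cls (\<lambda>q. (i - 1) * delta p q) = cls (\<lambda>q. i * delta p q + - delta p q)" by (simp add: algebra_simps)
  also have "\<dots> = kadd Tens (cls (\<lambda>q. i * delta p q)) (cls (\<lambda>q. - delta p q))"
    using p dp by (simp add: tensor_add_cls tfree_delta tfree_scale)
  also have "\<dots> = cls (delta p) [^]\<^bsub>additive_group Tens\<^esub> (i - 1)"
    using step2 p T.G.int_pow_diff[of "cls (delta p)" i 1] inv by (simp add: tfree_delta)
  finally show ?case .
qed


end

section \<open>Maps out of balanced tensor products\<close>

definition zsum :: "('c, 'k::comm_ring_1) kmod \<Rightarrow> ('p \<Rightarrow> 'c) \<Rightarrow> ('p \<Rightarrow> int) \<Rightarrow> 'c" where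
  "zsum U \<beta> f = finprod (additive_group U) (\<lambda>q. ksmult U (of_int (f q)) (\<beta> q)) (supp f)"

definition pairs_into :: "('a, 'k) kmod \<Rightarrow> ('b, 'k) kmod \<Rightarrow> ('c, 'k) kmod \<Rightarrow>
  ('a \<times> 'b \<Rightarrow> 'c) \<Rightarrow> bool" where
  "pairs_into M N U \<beta> \<longleftrightarrow>
     (\<forall>m\<in>kcarrier M. \<forall>n\<in>kcarrier N. \<beta> (m, n) \<in> kcarrier U)"

definition balanced_biadditive :: "('a, 'k) kmod \<Rightarrow> ('b, 'k) kmod \<Rightarrow>
  (('a \<times> 'b) \<times> ('a \<times> 'b)) set \<Rightarrow> ('c, 'k) kmod \<Rightarrow>
  ('a \<times> 'b \<Rightarrow> 'c) \<Rightarrow> bool" where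
  "balanced_biadditive M N Bal U \<beta> \<longleftrightarrow> pairs_into M N U \<beta> \<and>
     (\<forall>m\<in>kcarrier M. \<forall>m'\<in>kcarrier M. \<forall>n\<in>kcarrier N. \<beta> (kadd M m m', n)
         = kadd U (\<beta> (m, n)) (\<beta> (m', n))) \<and>
     (\<forall>m\<in>kcarrier M. \<forall>n\<in>kcarrier N. \<forall>n'\<in>kcarrier N. \<beta> (m, kadd N n n')
         = kadd U (\<beta> (m, n)) (\<beta> (m, n'))) \<and>
     (\<forall>(p, p')\<in>Bal. \<beta> p = \<beta> p')"

definition left_klinear :: "('a, 'k::comm_ring_1) kmod \<Rightarrow> ('b, 'k) kmod \<Rightarrow> ('c, 'k) kmod \<Rightarrow>
  ('a \<times> 'b \<Rightarrow> 'c) \<Rightarrow> bool" where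
  "left_klinear M N U \<beta> \<longleftrightarrow>
     (\<forall>c. \<forall>m\<in>kcarrier M. \<forall>n\<in>kcarrier N. \<beta> (ksmult M c m, n) = ksmult U c (\<beta> (m, n)))"

lemma balanced_biadditiveI:
  assumes "\<And>m n. m \<in> kcarrier M \<Longrightarrow> n \<in> kcarrier N \<Longrightarrow> \<beta> (m, n) \<in> kcarrier U"
    and "\<And>m m' n. m \<in> kcarrier M \<Longrightarrow> m' \<in> kcarrier M \<Longrightarrow> n \<in> kcarrier N \<Longrightarrow>
           \<beta> (kadd M m m', n) = kadd U (\<beta> (m, n)) (\<beta> (m', n))"
    and "\<And>m n n'. m \<in> kcarrier M \<Longrightarrow> n \<in> kcarrier N \<Longrightarrow> n' \<in> kcarrier N \<Longrightarrow>
           \<beta> (m, kadd N n n') = kadd U (\<beta> (m, n)) (\<beta> (m, n'))"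
    and "\<And>p p'. (p, p') \<in> Bal \<Longrightarrow> \<beta> p = \<beta> p'"
  shows "balanced_biadditive M N Bal U \<beta>"
  using assms unfolding balanced_biadditive_def pairs_into_def by blast

definition additive_map :: "('a, 'k) kmod \<Rightarrow> ('c, 'k) kmod \<Rightarrow> ('a \<Rightarrow> 'c) \<Rightarrow> bool" where
  "additive_map A V F \<longleftrightarrow> (\<forall>x\<in>kcarrier A. F x \<in> kcarrier V) \<and>
     (\<forall>x\<in>kcarrier A. \<forall>y\<in>kcarrier A. F (kadd A x y) = kadd V (F x) (F y))"

lemma linmap_additive_map: "linmap A V F \<Longrightarrow> additive_map A V F"
  by (simp add: linmap_def additive_map_def)

lemma pairs_intoD: "pairs_into M N U \<beta> \<Longrightarrow> m \<in> kcarrier M \<Longrightarrow>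
  n \<in> kcarrier N \<Longrightarrow> \<beta> (m, n) \<in> kcarrier U"
  by (simp add: pairs_into_def)
lemma pairs_intoD': "pairs_into M N U \<beta> \<Longrightarrow> q \<in> kcarrier M \<times> kcarrier N \<Longrightarrow>
  \<beta> q \<in> kcarrier U"
  by (cases q) (simp add: pairs_into_def)

lemma balanced_biadditive_pairs_into: "balanced_biadditive M N Bal U \<beta> \<Longrightarrow> pairs_into M N U \<beta>"
  by (simp add: balanced_biadditive_def)

locale tensor_lift = balanced_tensor M N Bal + U: kmodule U
  for M :: "('a, 'k::comm_ring_1) kmod" and N :: "('b, 'k) kmod" and Bal
  and U :: "('c, 'k) kmod"

lemma tensor_liftI: "balanced_tensor M N Bal \<Longrightarrow> is_kmod U \<Longrightarrow> tensor_lift M N Bal U"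
  unfolding tensor_lift_def kmodule_def by simp

lemma additive_map_hom: "additive_map A V F \<Longrightarrow> F \<in> hom (additive_group A) (additive_group V)"
  unfolding additive_map_def by (intro homI) auto

context tensor_lift
begin

lemma zsum_terms_Pi: "pairs_into M N U \<beta> \<Longrightarrow> S \<subseteq> Pairs \<Longrightarrow>
  (\<lambda>q. ksmult U (of_int (h q)) (\<beta> q)) \<in> S \<rightarrow> carrier (additive_group U)"
proof
  fix q assume "pairs_into M N U \<beta>" "S \<subseteq> Pairs" "q \<in> S"
  then show "ksmult U (of_int (h q)) (\<beta> q) \<in> carrier (additive_group U)" using pairs_intoD'[of M N U \<beta> q] by auto
qed

lemma zsum_superset:
  assumes b: "pairs_into M N U \<beta>" and f: "f \<in> Free" and S: "finite S" "supp f \<subseteq> S" "S \<subseteq> Pairs"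
  shows "zsum U \<beta> f = finprod (additive_group U) (\<lambda>q. ksmult U (of_int (f q)) (\<beta> q)) S"
  unfolding zsum_def
proof (rule U.G.finprod_mono_neutral_cong_left[OF S(1) S(2)])
  show "\<And>i. i \<in> S - supp f \<Longrightarrow>
      ksmult U (of_int (f i)) (\<beta> i) = \<one>\<^bsub>additive_group U\<^esub>"
    using S b by (auto simp: supp_def pairs_intoD')
  show "(\<lambda>q. ksmult U (of_int (f q)) (\<beta> q)) \<in> S \<rightarrow> carrier (additive_group U)"
    using S b by (auto simp: pairs_intoD')
qed simp

lemma zsum_closed: "pairs_into M N U \<beta> \<Longrightarrow> f \<in> Free \<Longrightarrow> zsum U \<beta> f \<in> kcarrier U"
proof -
  assume b: "pairs_into M N U \<beta>" and f: "f \<in> Free"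
  have "(\<lambda>q. ksmult U (of_int (f q)) (\<beta> q)) \<in> supp f \<rightarrow> carrier (additive_group U)"
  proof
    fix q assume "q \<in> supp f"
    then have "q \<in> Pairs" using f by (auto simp: tfree_iff)
    then show "ksmult U (of_int (f q)) (\<beta> q) \<in> carrier (additive_group U)" using pairs_intoD'[OF b] by simp
  qed
  then show ?thesis unfolding zsum_def using U.G.finprod_closed by simp
qed

lemma zsum_zero: "zsum U \<beta> (\<lambda>_. 0) = kzero U"
  by (simp add: zsum_def supp_zero)

lemma zsum_add:
  assumes b: "pairs_into M N U \<beta>" and f: "f \<in> Free" and g: "g \<in> Free"
  shows "zsum U \<beta> (\<lambda>q. f q + g q) = kadd U (zsum U \<beta> f) (zsum U \<beta> g)"
proof -
  let ?S = "supp f \<union> supp g"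
  have S: "finite ?S" "?S \<subseteq> Pairs" using f g by (auto simp: tfree_iff)
  have "zsum U \<beta> (\<lambda>q. f q + g q)
      = finprod (additive_group U) (\<lambda>q. ksmult U (of_int (f q + g q)) (\<beta> q)) ?S"
    by (rule zsum_superset[OF b tfree_add[OF f g] S(1) supp_add S(2)])
  also have "\<dots> = finprod (additive_group U)
      (\<lambda>q. kadd U (ksmult U (of_int (f q)) (\<beta> q)) (ksmult U (of_int (g q)) (\<beta> q))) ?S"
    using S b by (intro U.G.finprod_cong') (auto simp: pairs_intoD' U.smult_add_left Pi_iff)
  also have "\<dots> = kadd U (finprod (additive_group U) (\<lambda>q. ksmult U (of_int (f q)) (\<beta> q)) ?S)
      (finprod (additive_group U) (\<lambda>q. ksmult U (of_int (g q)) (\<beta> q)) ?S)"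
    using U.G.finprod_multf[OF zsum_terms_Pi[OF b S(2)] zsum_terms_Pi[OF b S(2)]] by simp
  also have "\<dots> = kadd U (zsum U \<beta> f) (zsum U \<beta> g)"
    using zsum_superset[OF b f S(1) _ S(2)] zsum_superset[OF b g S(1) _ S(2)] by simp
  finally show ?thesis .
qed

lemma zsum_neg:
  assumes b: "pairs_into M N U \<beta>" and f: "f \<in> Free"
  shows "zsum U \<beta> (\<lambda>q. - f q) = inv\<^bsub>additive_group U\<^esub> (zsum U \<beta> f)"
proof -
  have f': "(\<lambda>q. - f q) \<in> Free" using tfree_scale[OF f, of "-1"] by simp
  have "zsum U \<beta> (\<lambda>q. - f q + f q) = kadd U (zsum U \<beta> (\<lambda>q. - f q)) (zsum U \<beta> f)"
    using zsum_add[OF b f' f] .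
  moreover have "(\<lambda>q. - f q + f q) = (\<lambda>_. 0)" by simp
  ultimately have "kadd U (zsum U \<beta> (\<lambda>q. - f q)) (zsum U \<beta> f) = kzero U"
    using zsum_zero by metis
  then show ?thesis
    using U.G.inv_equality[of "zsum U \<beta> (\<lambda>q. - f q)" "zsum U \<beta> f"] zsum_closed[OF b f]
        zsum_closed[OF b f'] by simp
qed

lemma zsum_diff:
  assumes b: "pairs_into M N U \<beta>" and f: "f \<in> Free" and g: "g \<in> Free"
  shows "zsum U \<beta> (\<lambda>q. f q - g q)
      = kadd U (zsum U \<beta> f) (inv\<^bsub>additive_group U\<^esub> (zsum U \<beta> g))"
proof -
  have g': "(\<lambda>q. - g q) \<in> Free" using tfree_scale[OF g, of "-1"] by simp
  have "zsum U \<beta> (\<lambda>q. f q - g q) = zsum U \<beta> (\<lambda>q. f q + (- g q))" by simp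
  also have "\<dots> = kadd U (zsum U \<beta> f) (zsum U \<beta> (\<lambda>q. - g q))" by (rule zsum_add[OF b f g'])
  finally show ?thesis using zsum_neg[OF b g] by simp
qed

lemma zsum_delta_scale:
  assumes b: "pairs_into M N U \<beta>" and p: "p \<in> Pairs"
  shows "zsum U \<beta> (\<lambda>q. n * delta p q) = ksmult U (of_int n) (\<beta> p)"
proof -
  have d: "(\<lambda>q. n * delta p q) \<in> Free" using tfree_scale[OF tfree_delta[OF p]] .
  have "zsum U \<beta> (\<lambda>q. n * delta p q)
      = finprod (additive_group U) (\<lambda>q. ksmult U (of_int (n * delta p q)) (\<beta> q)) {p}"
    by (rule zsum_superset[OF b d]) (use p supp_scale[of n "delta p"] supp_delta[of p] in auto)
  also have "\<dots> = ksmult U (of_int n) (\<beta> p)"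
    using p b by (simp add: delta_def pairs_intoD')
  finally show ?thesis .
qed

lemma zsum_delta: "pairs_into M N U \<beta> \<Longrightarrow> p \<in> Pairs \<Longrightarrow>
  zsum U \<beta> (delta p) = \<beta> p"
  using zsum_delta_scale[of \<beta> p 1] by (simp add: pairs_intoD')

lemma zsum_Rel:
  assumes b: "balanced_biadditive M N Bal U \<beta>" and f: "f \<in> Rel"
  shows "zsum U \<beta> f = kzero U"
  using f
proof (induction rule: zspan.induct)
  case zspan_zero then show ?case by (rule zsum_zero)
next
  case (zspan_diff f g)
  then show ?case using zsum_diff[OF balanced_biadditive_pairs_into[OF b] Rel_tfree Rel_tfree] by simp
next
  case (zspan_gen s)
  note bm = balanced_biadditive_pairs_into[OF b]
  have d3: "zsum U \<beta> (\<lambda>q. delta a q - delta a' q - delta a'' q)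
      = kadd U (kadd U (\<beta> a) (inv\<^bsub>additive_group U\<^esub> (\<beta> a')))
      (inv\<^bsub>additive_group U\<^esub> (\<beta> a''))"
    if "a \<in> Pairs" "a' \<in> Pairs" "a'' \<in> Pairs" for a a' a''
    using that by (simp add: zsum_diff[OF bm] zsum_delta[OF bm] tfree_diff tfree_delta)
  from zspan_gen show ?case
  proof (cases rule: trelsE)
    case (add_left m m' n)
    have "\<beta> (kadd M m m', n) = kadd U (\<beta> (m, n)) (\<beta> (m', n))"
      using b add_left by (simp add: balanced_biadditive_def)
    then show ?thesis using add_left d3[of "(kadd M m m', n)" "(m, n)" "(m', n)"]
      by (simp add: U.add_inv_inv_eq_zero pairs_intoD[OF bm])
  next
    case (add_right m n n')
    have "\<beta> (m, kadd N n n') = kadd U (\<beta> (m, n)) (\<beta> (m, n'))"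
      using b add_right by (simp add: balanced_biadditive_def)
    then show ?thesis using add_right d3[of "(m, kadd N n n')" "(m, n)" "(m, n')"]
      by (simp add: U.add_inv_inv_eq_zero pairs_intoD[OF bm])
  next
    case (balanced p p')
    have "p \<in> Pairs" "p' \<in> Pairs" using balanced Bal_carr by auto
    moreover have "\<beta> p = \<beta> p'" using b balanced by (auto simp: balanced_biadditive_def)
    ultimately show ?thesis
      using balanced by (simp add: zsum_diff[OF bm] zsum_delta[OF bm] tfree_delta pairs_intoD'[OF bm])
  qed
qed

lemma tlift_eq_zsum:
  assumes b: "pairs_into M N U \<beta>" and t: "t \<in> kcarrier Tens"
  shows "tlift M N Bal U \<beta> t = zsum U \<beta> (trep t)"
proof -
  have f: "trep t \<in> Free" using carrier_trep[OF t] by blast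
  show ?thesis unfolding tlift_def Let_def zsum_def supp_def[symmetric]
    by (rule U.ksum_eq_finprod) (use f b in \<open>auto simp: tfree_iff pairs_intoD'\<close>)
qed

lemma tlift_cls:
  assumes b: "balanced_biadditive M N Bal U \<beta>" and f: "f \<in> Free"
  shows "tlift M N Bal U \<beta> (cls f) = zsum U \<beta> f"
proof -
  note bm = balanced_biadditive_pairs_into[OF b]
  have "tlift M N Bal U \<beta> (cls f) = zsum U \<beta> (trep (cls f))" by (rule tlift_eq_zsum[OF bm cls_in[OF f]])
  also have "trep (cls f) = (\<lambda>q. f q + (trep (cls f) q - f q))" by simp
  also have "zsum U \<beta> \<dots> = kadd U (zsum U \<beta> f) (zsum U \<beta> (\<lambda>q. trep (cls f) q - f q))"
    using zsum_add[OF bm f] trep_cls[OF f] Rel_tfree by blast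
  also have "\<dots> = zsum U \<beta> f" using zsum_Rel[OF b trep_cls(2)[OF f]] zsum_closed[OF bm f] by simp
  finally show ?thesis .
qed

lemma tlift_simple:
  assumes b: "balanced_biadditive M N Bal U \<beta>" and m: "m \<in> kcarrier M" and n: "n \<in> kcarrier N"
  shows "tlift M N Bal U \<beta> (tsimple M N Bal m n) = \<beta> (m, n)"
  unfolding tsimple_def using tlift_cls[OF b tfree_delta] zsum_delta[OF balanced_biadditive_pairs_into[OF b]] m n by simp

lemma tlift_closed:
  assumes b: "pairs_into M N U \<beta>" and t: "t \<in> kcarrier Tens"
  shows "tlift M N Bal U \<beta> t \<in> kcarrier U"
  using tlift_eq_zsum[OF b t] zsum_closed[OF b] carrier_trep[OF t] by simp

lemma tlift_add:
  assumes b: "balanced_biadditive M N Bal U \<beta>" and t: "t \<in> kcarrier Tens" and s: "s \<in> kcarrier Tens"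
  shows "tlift M N Bal U \<beta> (kadd Tens t s) = kadd U (tlift M N Bal U \<beta> t) (tlift M N Bal U \<beta> s)"
proof -
  obtain f g where f: "f \<in> Free" "t = cls f" and g: "g \<in> Free" "s = cls g" using t s carrier_tensorE by metis
  show ?thesis using f g by (simp add: tensor_add_cls tlift_cls[OF b] zsum_add[OF balanced_biadditive_pairs_into[OF b]] tfree_add)
qed

lemma zsum_fpush_smult_fst:
  assumes b: "pairs_into M N U \<beta>" and k: "left_klinear M N U \<beta>" and f: "f \<in> Free"
  shows "zsum U \<beta> (fpush (smult_fst c) f) = ksmult U c (zsum U \<beta> f)"
  using f
proof (induction rule: tfree_induct)
  case zero then show ?case by (simp add: fpush_zero zsum_zero)
next
  case (step f p n)
  obtain m n' where p: "p = (m, n')" "m \<in> kcarrier M" "n' \<in> kcarrier N" using step(2) by auto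
  have ff: "finite (supp f)" using step(1) by (simp add: tfree_iff)
  have fd: "finite (supp (\<lambda>q. n * delta p q))" using supp_scale[of n "delta p"] by (simp add: supp_delta finite_subset)
  have e: "fpush (smult_fst c) (\<lambda>q. f q + n * delta p q)
      = (\<lambda>r. fpush (smult_fst c) f r + n * delta (smult_fst c p) r)"
    using fpush_add[OF ff fd, of "smult_fst c"] fpush_scale[of "delta p" "smult_fst c" n] by (simp add: supp_delta fpush_delta)
  have pc: "smult_fst c p \<in> Pairs" using step(2) by (rule smult_fst_Pairs)
  have t1: "fpush (smult_fst c) f \<in> Free" by (rule fpush_smult_fst_tfree[OF step(1)])
  have t2: "(\<lambda>q. n * delta (smult_fst c p) q) \<in> Free" using tfree_scale[OF tfree_delta[OF pc]] .
  have bp: "\<beta> p \<in> kcarrier U" using b step(2) by (rule pairs_intoD')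
  have "zsum U \<beta> (fpush (smult_fst c) (\<lambda>q. f q + n * delta p q))
      = kadd U (zsum U \<beta> (fpush (smult_fst c) f)) (ksmult U (of_int n) (\<beta> (smult_fst c p)))"
    unfolding e by (simp add: zsum_add[OF b t1 t2] zsum_delta_scale[OF b pc])
  also have "\<beta> (smult_fst c p) = ksmult U c (\<beta> p)" using k p by (simp add: left_klinear_def)
  also have "kadd U (zsum U \<beta> (fpush (smult_fst c) f)) (ksmult U (of_int n) (ksmult U c (\<beta> p)))
     = ksmult U c (kadd U (zsum U \<beta> f) (ksmult U (of_int n) (\<beta> p)))"
    using step(4) zsum_closed[OF b step(1)] bp by (simp add: U.smult_add_right U.smult_comm)
  also have "kadd U (zsum U \<beta> f) (ksmult U (of_int n) (\<beta> p)) = zsum U \<beta> (\<lambda>q. f q + n * delta p q)"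
    using zsum_add[OF b step(1) tfree_scale[OF tfree_delta[OF step(2)]]] zsum_delta_scale[OF b step(2)] by simp
  finally show ?case .
qed

lemma tlift_smult:
  assumes b: "balanced_biadditive M N Bal U \<beta>" and k: "left_klinear M N U \<beta>" and t: "t \<in> kcarrier Tens"
  shows "tlift M N Bal U \<beta> (ksmult Tens c t) = ksmult U c (tlift M N Bal U \<beta> t)"
proof -
  obtain f where f: "f \<in> Free" "t = cls f" using t carrier_tensorE by metis
  show ?thesis using f by (simp add: tensor_smult_cls tlift_cls[OF b] fpush_smult_fst_tfree
      zsum_fpush_smult_fst[OF balanced_biadditive_pairs_into[OF b] k])
qed

lemma tlift_linmap:
  assumes b: "balanced_biadditive M N Bal U \<beta>" and k: "left_klinear M N U \<beta>"
  shows "linmap Tens U (tlift M N Bal U \<beta>)"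
  unfolding linmap_def using tlift_closed[OF balanced_biadditive_pairs_into[OF b]] tlift_add[OF b] tlift_smult[OF b k] by blast

lemma zsum_cong:
  assumes "\<And>q. q \<in> Pairs \<Longrightarrow> \<beta> q = \<beta>' q" "f \<in> Free" "pairs_into M N U \<beta>'"
  shows "zsum U \<beta> f = zsum U \<beta>' f"
  unfolding zsum_def using assms by (intro U.G.finprod_cong') (auto simp: tfree_iff pairs_intoD' Pi_iff)


lemma additive_map_cls_eq_zsum:
  assumes F: "additive_map Tens U F" and f: "f \<in> Free"
  shows "F (cls f) = zsum U (\<lambda>q. F (cls (delta q))) f"
  using f
proof (induction rule: tfree_induct)
  case zero
  have "F (kzero Tens) = kzero U"
    using hom_one[OF additive_map_hom[OF F] T.G.is_group U.G.is_group] by simp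
  moreover have "zsum U (\<lambda>q. F (cls (delta q))) (\<lambda>_. 0) = kzero U" by (rule zsum_zero)
  ultimately show ?case using tensor_zero_cls by simp
next
  case (step f p n)
  have bm: "pairs_into M N U (\<lambda>q. F (cls (delta q)))"
    using F unfolding pairs_into_def additive_map_def by (auto intro: tfree_delta)
  have dp: "cls (delta p) \<in> kcarrier Tens" using step(2) by (simp add: tfree_delta)
  have "F (cls (\<lambda>q. f q + n * delta p q)) = F (kadd Tens (cls f) (cls (\<lambda>q. n * delta p q)))"
    using step by (simp add: tensor_add_cls tfree_scale tfree_delta)
  also have "\<dots> = kadd U (F (cls f)) (F (cls (\<lambda>q. n * delta p q)))"
    using F step by (simp add: additive_map_def tfree_scale tfree_delta)
  finally have e1: "F (cls (\<lambda>q. f q + n * delta p q)) = kadd U (F (cls f)) (F (cls (\<lambda>q. n * delta p q)))" .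
  have "F (cls (\<lambda>q. n * delta p q)) = F (cls (delta p)) [^]\<^bsub>additive_group U\<^esub> n"
    using cls_scale_delta[OF step(2)] hom_int_pow[OF additive_map_hom[OF F] _ T.G.is_group U.G.is_group] dp by simp
  also have "\<dots> = ksmult U (of_int n) (F (cls (delta p)))"
    using U.smult_of_int F dp by (simp add: additive_map_def)
  also have "\<dots> = zsum U (\<lambda>q. F (cls (delta q))) (\<lambda>q. n * delta p q)"
    using zsum_delta_scale[OF bm step(2)] by simp
  finally have e2: "F (cls (\<lambda>q. n * delta p q)) = zsum U (\<lambda>q. F (cls (delta q))) (\<lambda>q. n * delta p q)" .
  show ?case using e1 e2 step(4) zsum_add[OF bm step(1) tfree_scale[OF tfree_delta[OF step(2)]]] by simp
qed

lemma tensor_ext: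
  assumes F: "additive_map Tens U F" and G: "additive_map Tens U G"
    and eq: "\<And>m n. m \<in> kcarrier M \<Longrightarrow> n \<in> kcarrier N \<Longrightarrow>
        F (tsimple M N Bal m n) = G (tsimple M N Bal m n)"
    and t: "t \<in> kcarrier Tens"
  shows "F t = G t"
proof -
  obtain f where f: "f \<in> Free" "t = cls f" using t carrier_tensorE by metis
  have bm: "pairs_into M N U (\<lambda>q. G (cls (delta q)))"
    using G unfolding pairs_into_def additive_map_def by (auto intro: tfree_delta)
  have "F t = zsum U (\<lambda>q. F (cls (delta q))) f" using additive_map_cls_eq_zsum[OF F f(1)] f(2) by simp
  also have "\<dots> = zsum U (\<lambda>q. G (cls (delta q))) f"
  proof (rule zsum_cong[OF _ f(1) bm])
    fix q assume "q \<in> Pairs"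
    then show "F (cls (delta q)) = G (cls (delta q))" using eq[of "fst q" "snd q"] by (cases q) (simp add: tsimple_def)
  qed
  also have "\<dots> = G t" using additive_map_cls_eq_zsum[OF G f(1)] f(2) by simp
  finally show ?thesis .
qed

end

section \<open>Tensor products of maps\<close>

definition maps_balanced :: "(('a \<times> 'b) \<times> ('a \<times> 'b)) set \<Rightarrow>
  (('c \<times> 'd) \<times> ('c \<times> 'd)) set \<Rightarrow> ('a \<Rightarrow> 'c) \<Rightarrow> ('b \<Rightarrow> 'd)
  \<Rightarrow> bool" where
  "maps_balanced Bal Bal' f g \<longleftrightarrow>
      (\<forall>p p'. (p, p') \<in> Bal \<longrightarrow> ((f (fst p), g (snd p)), (f (fst p'), g (snd p'))) \<in> Bal')"

definition tmap_admissible :: "('a, 'k::comm_ring_1) kmod \<Rightarrow> ('b, 'k) kmod \<Rightarrow> (('a \<times> 'b) \<times> ('a \<times> 'b)) set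
    \<Rightarrow> ('c, 'k) kmod \<Rightarrow> ('d, 'k) kmod \<Rightarrow> (('c \<times> 'd) \<times> ('c \<times> 'd)) set
    \<Rightarrow> ('a \<Rightarrow> 'c) \<Rightarrow> ('b \<Rightarrow> 'd) \<Rightarrow> bool" where
  "tmap_admissible M N Bal M' N' Bal' f g \<longleftrightarrow> balanced_tensor M N Bal \<and>
      balanced_tensor M' N' Bal' \<and> linmap M M' f \<and> linmap N N' g \<and> maps_balanced Bal Bal' f g"

lemma linmapD: "linmap M N f \<Longrightarrow> x \<in> kcarrier M \<Longrightarrow> f x \<in> kcarrier N"
  "linmap M N f \<Longrightarrow> x \<in> kcarrier M \<Longrightarrow> y \<in> kcarrier M \<Longrightarrow>
      f (kadd M x y) = kadd N (f x) (f y)"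
  "linmap M N f \<Longrightarrow> x \<in> kcarrier M \<Longrightarrow> f (ksmult M c x) = ksmult N c (f x)"
  by (simp_all add: linmap_def)

lemma tmap_admissible_balanced_biadditive:
  assumes "tmap_admissible M N Bal M' N' Bal' f g"
  shows "balanced_biadditive M N Bal (tensor M' N' Bal') (\<lambda>(m, n). tsimple M' N' Bal' (f m) (g n))"
    "left_klinear M N (tensor M' N' Bal') (\<lambda>(m, n). tsimple M' N' Bal' (f m) (g n))"
proof -
  interpret S: balanced_tensor M N Bal using assms by (simp add: tmap_admissible_def)
  interpret S': balanced_tensor M' N' Bal' using assms by (simp add: tmap_admissible_def)
  have f: "linmap M M' f" and g: "linmap N N' g" and b: "maps_balanced Bal Bal' f g" using assms
      by (simp_all add: tmap_admissible_def)
  show "balanced_biadditive M N Bal (tensor M' N' Bal') (\<lambda>(m, n). tsimple M' N' Bal' (f m) (g n))"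
  proof (rule balanced_biadditiveI)
    fix p p' assume "(p, p') \<in> Bal"
    then show "(case p of (m, n) \<Rightarrow> tsimple M' N' Bal' (f m) (g n))
        = (case p' of (m, n) \<Rightarrow> tsimple M' N' Bal' (f m) (g n))"
      using b S'.simple_bal[of "(f (fst p), g (snd p))" "(f (fst p'), g (snd p'))"]
      unfolding maps_balanced_def by (simp add: case_prod_beta)
  qed (use f g in \<open>simp_all add: linmapD S'.simple_add_l S'.simple_add_r\<close>)
  show "left_klinear M N (tensor M' N' Bal') (\<lambda>(m, n). tsimple M' N' Bal' (f m) (g n))"
    unfolding left_klinear_def using f g by (simp add: linmapD S'.simple_smult)
qed

lemma tmap_admissible_tensor_lift: "tmap_admissible M N Bal M' N' Bal' f g \<Longrightarrow>
  tensor_lift M N Bal (tensor M' N' Bal')"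
  unfolding tmap_admissible_def by (metis tensor_liftI balanced_tensor.is_kmod_tensor)

lemma tmap_simple:
  assumes "tmap_admissible M N Bal M' N' Bal' f g" "m \<in> kcarrier M" "n \<in> kcarrier N"
  shows "tmap M N Bal M' N' Bal' f g (tsimple M N Bal m n) = tsimple M' N' Bal' (f m) (g n)"
  unfolding tmap_def using tensor_lift.tlift_simple[OF tmap_admissible_tensor_lift[OF assms(1)]
      tmap_admissible_balanced_biadditive(1)[OF assms(1)] assms(2,3)] by simp

lemma tmap_linmap:
  assumes "tmap_admissible M N Bal M' N' Bal' f g"
  shows "linmap (tensor M N Bal) (tensor M' N' Bal') (tmap M N Bal M' N' Bal' f g)"
  unfolding tmap_def by (rule tensor_lift.tlift_linmap[OF tmap_admissible_tensor_lift[OF assms]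
      tmap_admissible_balanced_biadditive[OF assms]])

lemma tmap_additive_map:
  assumes "tmap_admissible M N Bal M' N' Bal' f g"
  shows "additive_map (tensor M N Bal) (tensor M' N' Bal') (tmap M N Bal M' N' Bal' f g)"
  by (rule linmap_additive_map[OF tmap_linmap[OF assms]])

lemma tmap_closed:
  assumes "tmap_admissible M N Bal M' N' Bal' f g" "t \<in> kcarrier (tensor M N Bal)"
  shows "tmap M N Bal M' N' Bal' f g t \<in> kcarrier (tensor M' N' Bal')"
  using tmap_linmap[OF assms(1)] assms(2) by (simp add: linmapD)

lemma (in kmodule) add_add_swap:
  "a \<in> kcarrier T \<Longrightarrow> b \<in> kcarrier T \<Longrightarrow> c \<in> kcarrier T \<Longrightarrow>
      d \<in> kcarrier T \<Longrightarrow>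
   kadd T (kadd T a b) (kadd T c d) = kadd T (kadd T a c) (kadd T b d)"
  by (simp add: add_assoc add_lcomm[of b c d])

lemma additive_map_add:
  assumes "is_kmod V" "additive_map A V F" "additive_map A V G"
  shows "additive_map A V (\<lambda>t. kadd V (F t) (G t))"
proof -
  interpret V: kmodule V by (unfold_locales) (rule assms(1))
  show ?thesis using assms(2,3) unfolding additive_map_def by (auto simp: V.add_add_swap)
qed

lemma additive_map_smult:
  assumes "is_kmod V" "additive_map A V F"
  shows "additive_map A V (\<lambda>t. ksmult V c (F t))"
proof -
  interpret V: kmodule V by (unfold_locales) (rule assms(1))
  show ?thesis using assms(2) unfolding additive_map_def by (auto simp: V.smult_add_right)
qed

lemma additive_map_comp:
  "additive_map A B F \<Longrightarrow> additive_map B C G \<Longrightarrow> additive_map A C (\<lambda>t. G (F t))"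
  unfolding additive_map_def by auto

lemma additive_map_id: "additive_map A A (\<lambda>t. t)"
  unfolding additive_map_def by auto

lemma tmap_add_left_fun:
  assumes ok: "tmap_admissible M N Bal M' N' Bal' f g" "tmap_admissible M N Bal M' N' Bal' f1 g" "tmap_admissible M N Bal M'
      N' Bal' f2 g"
    and e: "\<And>m. m \<in> kcarrier M \<Longrightarrow> f m = kadd M' (f1 m) (f2 m)"
    and t: "t \<in> kcarrier (tensor M N Bal)"
  shows "tmap M N Bal M' N' Bal' f g t = kadd (tensor M' N' Bal') (tmap M N Bal M' N' Bal' f1 g t)
      (tmap M N Bal M' N' Bal' f2 g t)"
proof -
  interpret L: tensor_lift M N Bal "tensor M' N' Bal'" by (rule tmap_admissible_tensor_lift[OF ok(1)])
  interpret S': balanced_tensor M' N' Bal' using ok(1) by (simp add: tmap_admissible_def)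
  have f1: "linmap M M' f1" and f2: "linmap M M' f2" and g: "linmap N N' g" using ok by (simp_all add: tmap_admissible_def)
  show ?thesis
  proof (rule L.tensor_ext[OF tmap_additive_map[OF ok(1)]
        additive_map_add[OF L.U.kmod tmap_additive_map[OF ok(2)] tmap_additive_map[OF ok(3)]] _ t])
    fix m n assume "m \<in> kcarrier M" "n \<in> kcarrier N"
    then show "tmap M N Bal M' N' Bal' f g (tsimple M N Bal m n) =
      kadd (tensor M' N' Bal') (tmap M N Bal M' N' Bal' f1 g (tsimple M N Bal m n))
          (tmap M N Bal M' N' Bal' f2 g (tsimple M N Bal m n))"
      using f1 f2 g by (simp add: tmap_simple[OF ok(1)] tmap_simple[OF ok(2)] tmap_simple[OF ok(3)] e linmapD S'.simple_add_l)
  qed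
qed

lemma tmap_add_right_fun:
  assumes ok: "tmap_admissible M N Bal M' N' Bal' f g" "tmap_admissible M N Bal M' N' Bal' f g1" "tmap_admissible M N Bal M'
      N' Bal' f g2"
    and e: "\<And>n. n \<in> kcarrier N \<Longrightarrow> g n = kadd N' (g1 n) (g2 n)"
    and t: "t \<in> kcarrier (tensor M N Bal)"
  shows "tmap M N Bal M' N' Bal' f g t = kadd (tensor M' N' Bal') (tmap M N Bal M' N' Bal' f g1 t)
      (tmap M N Bal M' N' Bal' f g2 t)"
proof -
  interpret L: tensor_lift M N Bal "tensor M' N' Bal'" by (rule tmap_admissible_tensor_lift[OF ok(1)])
  interpret S': balanced_tensor M' N' Bal' using ok(1) by (simp add: tmap_admissible_def)
  have f: "linmap M M' f" and g1: "linmap N N' g1" and g2: "linmap N N' g2" using ok by (simp_all add: tmap_admissible_def)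
  show ?thesis
  proof (rule L.tensor_ext[OF tmap_additive_map[OF ok(1)]
        additive_map_add[OF L.U.kmod tmap_additive_map[OF ok(2)] tmap_additive_map[OF ok(3)]] _ t])
    fix m n assume "m \<in> kcarrier M" "n \<in> kcarrier N"
    then show "tmap M N Bal M' N' Bal' f g (tsimple M N Bal m n) =
      kadd (tensor M' N' Bal') (tmap M N Bal M' N' Bal' f g1 (tsimple M N Bal m n))
          (tmap M N Bal M' N' Bal' f g2 (tsimple M N Bal m n))"
      using f g1 g2 by (simp add: tmap_simple[OF ok(1)] tmap_simple[OF ok(2)] tmap_simple[OF ok(3)] e linmapD S'.simple_add_r)
  qed
qed

lemma tmap_smult_left_fun:
  assumes ok: "tmap_admissible M N Bal M' N' Bal' f g" "tmap_admissible M N Bal M' N' Bal' f1 g"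
    and e: "\<And>m. m \<in> kcarrier M \<Longrightarrow> f m = ksmult M' c (f1 m)"
    and t: "t \<in> kcarrier (tensor M N Bal)"
  shows "tmap M N Bal M' N' Bal' f g t = ksmult (tensor M' N' Bal') c (tmap M N Bal M' N' Bal' f1 g t)"
proof -
  interpret L: tensor_lift M N Bal "tensor M' N' Bal'" by (rule tmap_admissible_tensor_lift[OF ok(1)])
  interpret S': balanced_tensor M' N' Bal' using ok(1) by (simp add: tmap_admissible_def)
  have f1: "linmap M M' f1" and g: "linmap N N' g" using ok by (simp_all add: tmap_admissible_def)
  show ?thesis
  proof (rule L.tensor_ext[OF tmap_additive_map[OF ok(1)] additive_map_smult[OF L.U.kmod tmap_additive_map[OF ok(2)]] _ t])
    fix m n assume "m \<in> kcarrier M" "n \<in> kcarrier N"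
    then show "tmap M N Bal M' N' Bal' f g (tsimple M N Bal m n) =
      ksmult (tensor M' N' Bal') c (tmap M N Bal M' N' Bal' f1 g (tsimple M N Bal m n))"
      using f1 g by (simp add: tmap_simple[OF ok(1)] tmap_simple[OF ok(2)] e linmapD S'.simple_smult)
  qed
qed

lemma tmap_smult_right_fun:
  assumes ok: "tmap_admissible M N Bal M' N' Bal' f g" "tmap_admissible M N Bal M' N' Bal' f g1"
    and kb: "kbal M' N' \<subseteq> Bal'"
    and e: "\<And>n. n \<in> kcarrier N \<Longrightarrow> g n = ksmult N' c (g1 n)"
    and t: "t \<in> kcarrier (tensor M N Bal)"
  shows "tmap M N Bal M' N' Bal' f g t = ksmult (tensor M' N' Bal') c (tmap M N Bal M' N' Bal' f g1 t)"
proof -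
  interpret L: tensor_lift M N Bal "tensor M' N' Bal'" by (rule tmap_admissible_tensor_lift[OF ok(1)])
  interpret S': balanced_tensor M' N' Bal' using ok(1) by (simp add: tmap_admissible_def)
  have f: "linmap M M' f" and g1: "linmap N N' g1" using ok by (simp_all add: tmap_admissible_def)
  show ?thesis
  proof (rule L.tensor_ext[OF tmap_additive_map[OF ok(1)] additive_map_smult[OF L.U.kmod tmap_additive_map[OF ok(2)]] _ t])
    fix m n assume "m \<in> kcarrier M" "n \<in> kcarrier N"
    then show "tmap M N Bal M' N' Bal' f g (tsimple M N Bal m n) =
      ksmult (tensor M' N' Bal') c (tmap M N Bal M' N' Bal' f g1 (tsimple M N Bal m n))"
      using f g1 by (simp add: tmap_simple[OF ok(1)] tmap_simple[OF ok(2)] e linmapD S'.simple_smult_r[OF kb])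
  qed
qed

lemma tmap_cong:
  assumes ok: "tmap_admissible M N Bal M' N' Bal' f g" "tmap_admissible M N Bal M' N' Bal' f' g'"
    and e: "\<And>m. m \<in> kcarrier M \<Longrightarrow> f m = f' m" "\<And>n. n \<in> kcarrier N \<Longrightarrow> g n = g' n"
    and t: "t \<in> kcarrier (tensor M N Bal)"
  shows "tmap M N Bal M' N' Bal' f g t = tmap M N Bal M' N' Bal' f' g' t"
proof -
  interpret L: tensor_lift M N Bal "tensor M' N' Bal'" by (rule tmap_admissible_tensor_lift[OF ok(1)])
  show ?thesis
    by (rule L.tensor_ext[OF tmap_additive_map[OF ok(1)] tmap_additive_map[OF ok(2)] _ t])
      (simp add: tmap_simple[OF ok(1)] tmap_simple[OF ok(2)] e)
qed

lemma tmap_comp: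
  assumes ok: "tmap_admissible M N Bal M' N' Bal' f g" "tmap_admissible M' N' Bal' M'' N'' Bal'' f' g'" "tmap_admissible M N
      Bal M'' N'' Bal'' h k"
    and e: "\<And>m. m \<in> kcarrier M \<Longrightarrow> h m = f' (f m)" "\<And>n. n \<in> kcarrier N \<Longrightarrow>
        k n = g' (g n)"
    and t: "t \<in> kcarrier (tensor M N Bal)"
  shows "tmap M' N' Bal' M'' N'' Bal'' f' g' (tmap M N Bal M' N' Bal' f g t) = tmap M N Bal M'' N'' Bal'' h k t"
proof -
  interpret L: tensor_lift M N Bal "tensor M'' N'' Bal''" by (rule tmap_admissible_tensor_lift[OF ok(3)])
  have f: "linmap M M' f" and g: "linmap N N' g" using ok by (simp_all add: tmap_admissible_def)
  show ?thesis
  proof (rule L.tensor_ext[OF additive_map_comp[OF tmap_additive_map[OF ok(1)] tmap_additive_map[OF ok(2)]]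
      tmap_additive_map[OF ok(3)] _ t])
    fix m n assume "m \<in> kcarrier M" "n \<in> kcarrier N"
    then show "tmap M' N' Bal' M'' N'' Bal'' f' g' (tmap M N Bal M' N' Bal' f g (tsimple M N Bal m n)) =
      tmap M N Bal M'' N'' Bal'' h k (tsimple M N Bal m n)"
      using f g by (simp add: tmap_simple[OF ok(1)] tmap_simple[OF ok(2)] tmap_simple[OF ok(3)] e linmapD)
  qed
qed

lemma tmap_id:
  assumes ok: "tmap_admissible M N Bal M N Bal f g"
    and e: "\<And>m. m \<in> kcarrier M \<Longrightarrow> f m = m" "\<And>n. n \<in> kcarrier N \<Longrightarrow> g n = n"
    and t: "t \<in> kcarrier (tensor M N Bal)"
  shows "tmap M N Bal M N Bal f g t = t"
proof -
  interpret L: tensor_lift M N Bal "tensor M N Bal" by (rule tmap_admissible_tensor_lift[OF ok(1)])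
  show ?thesis
    by (rule L.tensor_ext[OF tmap_additive_map[OF ok(1)] additive_map_id _ t])
      (simp add: tmap_simple[OF ok(1)] e)
qed

lemma tmap_family_left_klinear:
  assumes ok: "\<And>m. m \<in> kcarrier M \<Longrightarrow> tmap_admissible M1 N1 Bal1 M2 N2 Bal2 (\<Phi> m) g"
    and smult: "\<And>c m u. m \<in> kcarrier M \<Longrightarrow> u \<in> kcarrier M1 \<Longrightarrow>
        \<Phi> (ksmult M c m) u = ksmult M2 c (\<Phi> m u)"
    and M: "is_kmod M" and v: "linmap N (tensor M1 N1 Bal1) v"
  shows "left_klinear M N (tensor M2 N2 Bal2) (\<lambda>(m, n). tmap M1 N1 Bal1 M2 N2 Bal2 (\<Phi> m) g (v n))"
proof -
  interpret M: kmodule M by unfold_locales (rule M)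
  show ?thesis
    unfolding left_klinear_def
    by (intro allI ballI, simp only: prod.case, intro tmap_smult_left_fun ok smult linmapD(1)[OF v]) simp_all
qed

lemma tmap_family_balanced_biadditive:
  assumes ok: "\<And>m. m \<in> kcarrier M \<Longrightarrow> tmap_admissible M1 N1 Bal1 M2 N2 Bal2 (\<Phi> m) g"
    and add: "\<And>m m' u. m \<in> kcarrier M \<Longrightarrow> m' \<in> kcarrier M \<Longrightarrow> u \<in> kcarrier M1 \<Longrightarrow>
        \<Phi> (kadd M m m') u = kadd M2 (\<Phi> m u) (\<Phi> m' u)"
    and smult: "\<And>c m u. m \<in> kcarrier M \<Longrightarrow> u \<in> kcarrier M1 \<Longrightarrow>
        \<Phi> (ksmult M c m) u = ksmult M2 c (\<Phi> m u)"
    and M: "is_kmod M" and v: "linmap N (tensor M1 N1 Bal1) v"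
    and bal: "\<And>p p'. (p, p') \<in> Bal - kbal M N \<Longrightarrow>
                (case p of (m, n) \<Rightarrow> tmap M1 N1 Bal1 M2 N2 Bal2 (\<Phi> m) g (v n))
              = (case p' of (m, n) \<Rightarrow> tmap M1 N1 Bal1 M2 N2 Bal2 (\<Phi> m) g (v n))"
  shows "balanced_biadditive M N Bal (tensor M2 N2 Bal2) (\<lambda>(m, n). tmap M1 N1 Bal1 M2 N2 Bal2 (\<Phi> m) g (v n))"
proof -
  interpret M: kmodule M by unfold_locales (rule M)
  have vN: "n \<in> kcarrier N \<Longrightarrow> v n \<in> kcarrier (tensor M1 N1 Bal1)" for n
    by (rule linmapD(1)[OF v])
  show ?thesis
  proof (rule balanced_biadditiveI)
    fix p p' assume pp': "(p, p') \<in> Bal"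
    show "(case p of (m, n) \<Rightarrow> tmap M1 N1 Bal1 M2 N2 Bal2 (\<Phi> m) g (v n))
        = (case p' of (m, n) \<Rightarrow> tmap M1 N1 Bal1 M2 N2 Bal2 (\<Phi> m) g (v n))"
    proof (cases "(p, p') \<in> kbal M N")
      case True
      then obtain c m n where p: "p = (ksmult M c m, n)" "p' = (m, ksmult N c n)"
        and m: "m \<in> kcarrier M" and n: "n \<in> kcarrier N"
        by (auto simp: kbal_def)
      have "tmap M1 N1 Bal1 M2 N2 Bal2 (\<Phi> (ksmult M c m)) g (v n)
          = ksmult (tensor M2 N2 Bal2) c (tmap M1 N1 Bal1 M2 N2 Bal2 (\<Phi> m) g (v n))"
        using m n by (intro tmap_smult_left_fun ok smult vN) auto
      also have "\<dots> = tmap M1 N1 Bal1 M2 N2 Bal2 (\<Phi> m) g (v (ksmult N c n))"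
        using linmapD(3)[OF tmap_linmap[OF ok[OF m]] vN[OF n]] linmapD(3)[OF v n] by simp
      finally show ?thesis using p by simp
    qed (use bal pp' in blast)
  next
    fix m m' n assume "m \<in> kcarrier M" "m' \<in> kcarrier M" "n \<in> kcarrier N"
    then show "(case (kadd M m m', n) of (m, n) \<Rightarrow> tmap M1 N1 Bal1 M2 N2 Bal2 (\<Phi> m) g (v n))
        = kadd (tensor M2 N2 Bal2) (case (m, n) of (m, n) \<Rightarrow> tmap M1 N1 Bal1 M2 N2 Bal2 (\<Phi> m) g (v n))
            (case (m', n) of (m, n) \<Rightarrow> tmap M1 N1 Bal1 M2 N2 Bal2 (\<Phi> m) g (v n))"
      by (simp only: prod.case) (intro tmap_add_left_fun ok add vN; simp)
  next
    fix m n n' assume "m \<in> kcarrier M" "n \<in> kcarrier N" "n' \<in> kcarrier N"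
    then show "(case (m, kadd N n n') of (m, n) \<Rightarrow> tmap M1 N1 Bal1 M2 N2 Bal2 (\<Phi> m) g (v n))
        = kadd (tensor M2 N2 Bal2) (case (m, n) of (m, n) \<Rightarrow> tmap M1 N1 Bal1 M2 N2 Bal2 (\<Phi> m) g (v n))
            (case (m, n') of (m, n) \<Rightarrow> tmap M1 N1 Bal1 M2 N2 Bal2 (\<Phi> m) g (v n))"
      by (simp add: linmapD(2)[OF v] linmapD(2)[OF tmap_linmap[OF ok]] vN)
  qed (simp add: tmap_closed ok vN)
qed

lemma balanced_tensor_kbal:
  assumes "is_kmod M" "is_kmod N"
  shows "balanced_tensor M N (kbal M N)"
proof -
  interpret M: kmodule M by unfold_locales (rule assms(1))
  interpret N: kmodule N by unfold_locales (rule assms(2))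
  show ?thesis
  proof (unfold_locales)
    show "kbal M N \<subseteq> (kcarrier M \<times> kcarrier N) \<times> kcarrier M \<times> kcarrier N" by (auto simp: kbal_def)
  next
    fix p p' c assume "(p, p') \<in> kbal M N"
    then obtain d m n where "p = (ksmult M d m, n)" "p' = (m, ksmult N d n)" "m \<in> kcarrier M" "n \<in> kcarrier N"
      by (auto simp: kbal_def)
    moreover have "ksmult M c (ksmult M d m) = ksmult M d (ksmult M c m)" using calculation by (simp add: M.smult_comm)
    ultimately show "((ksmult M c (fst p), snd p), ksmult M c (fst p'), snd p') \<in> kbal M N"
      unfolding kbal_def by auto
  qed
qed

lemma maps_balanced_kbal:
  assumes "linmap M M' f" "linmap N N' g"
  shows "maps_balanced (kbal M N) (kbal M' N') f g"
  unfolding maps_balanced_def kbal_def using assms by (auto simp: linmapD)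

lemma tmap_admissible_kbal:
  assumes "is_kmod M" "is_kmod N" "is_kmod M'" "is_kmod N'" "linmap M M' f" "linmap N N' g"
  shows "tmap_admissible M N (kbal M N) M' N' (kbal M' N') f g"
  unfolding tmap_admissible_def using assms by (simp add: balanced_tensor_kbal maps_balanced_kbal)

lemma kprod_ksimple_left:
  assumes mods: "is_kmod M1" "is_kmod N1" "is_kmod M2" "is_kmod N2" "is_kmod M3" "is_kmod N3"
    and f: "\<And>a. a \<in> kcarrier M1 \<Longrightarrow> linmap M2 M3 (f a)"
    and f_add: "\<And>a a' u. a \<in> kcarrier M1 \<Longrightarrow> a' \<in> kcarrier M1 \<Longrightarrow> u \<in> kcarrier M2 \<Longrightarrow>
        f (kadd M1 a a') u = kadd M3 (f a u) (f a' u)"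
    and f_smult: "\<And>c a u. a \<in> kcarrier M1 \<Longrightarrow> u \<in> kcarrier M2 \<Longrightarrow>
        f (ksmult M1 c a) u = ksmult M3 c (f a u)"
    and g: "\<And>b. b \<in> kcarrier N1 \<Longrightarrow> linmap N2 N3 (g b)"
    and g_add: "\<And>b b' v. b \<in> kcarrier N1 \<Longrightarrow> b' \<in> kcarrier N1 \<Longrightarrow> v \<in> kcarrier N2 \<Longrightarrow>
        g (kadd N1 b b') v = kadd N3 (g b v) (g b' v)"
    and g_smult: "\<And>c b v. b \<in> kcarrier N1 \<Longrightarrow> v \<in> kcarrier N2 \<Longrightarrow>
        g (ksmult N1 c b) v = ksmult N3 c (g b v)"
    and a: "a \<in> kcarrier M1" and b: "b \<in> kcarrier N1" and s: "s \<in> kcarrier (ktens M2 N2)"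
  shows "kprod M1 N1 M2 N2 M3 N3 f g (ksimple M1 N1 a b) s = kmap M2 N2 M3 N3 (f a) (g b) s"
proof -
  interpret L: tensor_lift M1 N1 "kbal M1 N1" "ktens M3 N3"
    by (intro tensor_liftI balanced_tensor_kbal balanced_tensor.is_kmod_tensor mods)
  interpret M1: kmodule M1 by unfold_locales (rule mods(1))
  interpret N1: kmodule N1 by unfold_locales (rule mods(2))
  have ok: "a \<in> kcarrier M1 \<Longrightarrow> b \<in> kcarrier N1 \<Longrightarrow>
      tmap_admissible M2 N2 (kbal M2 N2) M3 N3 (kbal M3 N3) (f a) (g b)" for a b
    by (intro tmap_admissible_kbal mods f g)
  have "balanced_biadditive M1 N1 (kbal M1 N1) (ktens M3 N3) (\<lambda>(a, b). kmap M2 N2 M3 N3 (f a) (g b) s)"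
  proof (rule balanced_biadditiveI)
    fix p p' assume "(p, p') \<in> kbal M1 N1"
    then obtain c a b where p: "p = (ksmult M1 c a, b)" "p' = (a, ksmult N1 c b)"
      and a: "a \<in> kcarrier M1" and b: "b \<in> kcarrier N1"
      by (auto simp: kbal_def)
    have "kmap M2 N2 M3 N3 (f (ksmult M1 c a)) (g b) s = ksmult (ktens M3 N3) c (kmap M2 N2 M3 N3 (f a) (g b) s)"
      using a b by (intro tmap_smult_left_fun ok f_smult s) simp_all
    also have "\<dots> = kmap M2 N2 M3 N3 (f a) (g (ksmult N1 c b)) s"
      using a b by (intro tmap_smult_right_fun[symmetric] ok g_smult s) simp_all
    finally show "(case p of (a, b) \<Rightarrow> kmap M2 N2 M3 N3 (f a) (g b) s)
        = (case p' of (a, b) \<Rightarrow> kmap M2 N2 M3 N3 (f a) (g b) s)"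
      using p by simp
  qed (simp_all add: tmap_closed tmap_add_left_fun tmap_add_right_fun ok f_add g_add s)
  then show ?thesis
    unfolding kprod_def tmap_def[symmetric] using L.tlift_simple a b by simp
qed

section \<open>Coactions on linear categories\<close>

lemma klin_catD:
  assumes "klin_cat X M mul onef"
  shows "\<forall>x\<in>X. \<forall>y\<in>X. is_kmod (M x y)"
   "\<forall>x\<in>X. \<forall>y\<in>X. \<forall>z\<in>X. \<forall>a\<in>kcarrier (M x y). \<forall>b\<in>kcarrier (M y z).
        mul x y z a b \<in> kcarrier (M x z)"
   "\<forall>x\<in>X. \<forall>y\<in>X. \<forall>z\<in>X. \<forall>a\<in>kcarrier (M x y). \<forall>a'\<in>kcarrier (M x y).
       \<forall>b\<in>kcarrier (M y z).
        mul x y z (kadd (M x y) a a') b = kadd (M x z) (mul x y z a b) (mul x y z a' b)"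
   "\<forall>x\<in>X. \<forall>y\<in>X. \<forall>z\<in>X. \<forall>a\<in>kcarrier (M x y). \<forall>b\<in>kcarrier (M y z).
       \<forall>b'\<in>kcarrier (M y z).
        mul x y z a (kadd (M y z) b b') = kadd (M x z) (mul x y z a b) (mul x y z a b')"
   "\<forall>x\<in>X. \<forall>y\<in>X. \<forall>z\<in>X. \<forall>c. \<forall>a\<in>kcarrier (M x y).
       \<forall>b\<in>kcarrier (M y z).
        mul x y z (ksmult (M x y) c a) b = ksmult (M x z) c (mul x y z a b) \<and>
        mul x y z a (ksmult (M y z) c b) = ksmult (M x z) c (mul x y z a b)"
   "\<forall>x\<in>X. \<forall>y\<in>X. \<forall>z\<in>X. \<forall>w\<in>X. \<forall>a\<in>kcarrier (M x y).
       \<forall>b\<in>kcarrier (M y z). \<forall>c\<in>kcarrier (M z w).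
        mul x z w (mul x y z a b) c = mul x y w a (mul y z w b c)"
   "\<forall>x\<in>X. onef x \<in> kcarrier (M x x)"
   "\<forall>x\<in>X. \<forall>y\<in>X. \<forall>a\<in>kcarrier (M x y). mul x x y (onef x) a = a \<and> mul x y y a (onef y) = a"
  apply (insert assms[unfolded klin_cat_def])
  apply (elim conjE; assumption)+
  done

lemma linmap_comp: "linmap A B F \<Longrightarrow> linmap B C G \<Longrightarrow> linmap A C (\<lambda>t. G (F t))"
  unfolding linmap_def by auto

lemma linmap_inv_into:
  assumes kA: "is_kmod A" and F: "linmap A B F" and bij: "bij_betw F (kcarrier A) (kcarrier B)"
  shows "linmap B A (inv_into (kcarrier A) F)"
proof -
  interpret A: kmodule A by unfold_locales (rule kA)
  let ?G = "inv_into (kcarrier A) F"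
  have inj: "inj_on F (kcarrier A)" and surj: "F ` kcarrier A = kcarrier B" using bij by (auto simp: bij_betw_def)
  have G1: "y \<in> kcarrier B \<Longrightarrow> ?G y \<in> kcarrier A" for y using surj by (metis inv_into_into)
  have G2: "y \<in> kcarrier B \<Longrightarrow> F (?G y) = y" for y using surj by (metis f_inv_into_f)
  have G3: "x \<in> kcarrier A \<Longrightarrow> ?G (F x) = x" for x using inj by (rule inv_into_f_f)
  show ?thesis unfolding linmap_def
  proof (intro conjI ballI allI)
    fix y assume "y \<in> kcarrier B" then show "?G y \<in> kcarrier A" by (rule G1)
  next
    fix y y' assume y: "y \<in> kcarrier B" "y' \<in> kcarrier B"
    have "F (kadd A (?G y) (?G y')) = kadd B y y'" using F G1 G2 y by (simp add: linmapD)
    then have "?G (kadd B y y') = ?G (F (kadd A (?G y) (?G y')))" by simp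
    also have "\<dots> = kadd A (?G y) (?G y')" using G1 G3 y by simp
    finally show "?G (kadd B y y') = kadd A (?G y) (?G y')" .
  next
    fix c y assume y: "y \<in> kcarrier B"
    have "F (ksmult A c (?G y)) = ksmult B c y" using F G1 G2 y by (simp add: linmapD)
    then have "?G (ksmult B c y) = ?G (F (ksmult A c (?G y)))" by simp
    also have "\<dots> = ksmult A c (?G y)" using G1 G3 y by simp
    finally show "?G (ksmult B c y) = ksmult A c (?G y)" .
  qed
qed

lemma linmap_id: "linmap M M id"
  by (simp add: linmap_def)

locale coaction_cat =
  fixes X :: "'x set"
    and H :: "'x \<Rightarrow> 'x \<Rightarrow> ('h, 'k::comm_ring_1) kmod"
    and hmul :: "'x \<Rightarrow> 'x \<Rightarrow> 'x \<Rightarrow> 'h \<Rightarrow> 'h \<Rightarrow> 'h" and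
        hone :: "'x \<Rightarrow> 'h"
    and A :: "'x \<Rightarrow> 'x \<Rightarrow> ('a, 'k) kmod"
    and mul :: "'x \<Rightarrow> 'x \<Rightarrow> 'x \<Rightarrow> 'a \<Rightarrow> 'a \<Rightarrow> 'a" and
        one :: "'x \<Rightarrow> 'a"
    and rho :: "'x \<Rightarrow> 'x \<Rightarrow> 'a \<Rightarrow> ('a \<times> 'h \<Rightarrow> int) set"
  assumes klin_cat_H: "klin_cat X H hmul hone"
    and klin_cat_A: "klin_cat X A mul one"
    and rho_lin: "x \<in> X \<Longrightarrow> y \<in> X \<Longrightarrow> linmap (A x y) (ktens (A x y) (H x y)) (rho x y)"
    and rho_mul: "x \<in> X \<Longrightarrow> y \<in> X \<Longrightarrow> z \<in> X \<Longrightarrow>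
        a \<in> kcarrier (A x y) \<Longrightarrow> b \<in> kcarrier (A y z) \<Longrightarrow>
        rho x z (mul x y z a b) =
          kprod (A x y) (H x y) (A y z) (H y z) (A x z) (H x z) (mul x y z) (hmul x y z) (rho x y a) (rho y z b)"
begin

lemmas A_cat = klin_catD[OF klin_cat_A]
lemmas H_cat = klin_catD[OF klin_cat_H]

lemma A_kmod: "\<lbrakk>x \<in> X; y \<in> X\<rbrakk> \<Longrightarrow> is_kmod (A x y)"
  using A_cat(1) by blast
lemma H_kmod: "\<lbrakk>x \<in> X; y \<in> X\<rbrakk> \<Longrightarrow> is_kmod (H x y)"
  using H_cat(1) by blast

lemma mul_closed[simp,intro]:
  "\<lbrakk>x \<in> X; y \<in> X; z \<in> X; a \<in> kcarrier (A x y); b \<in> kcarrier (A y z)\<rbrakk>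
   \<Longrightarrow> mul x y z a b \<in> kcarrier (A x z)"
  using A_cat(2) by blast
lemma mul_add_l:
  "\<lbrakk>x \<in> X; y \<in> X; z \<in> X; a \<in> kcarrier (A x y); a' \<in> kcarrier (A x y); b \<in> kcarrier (A y z)\<rbrakk>
   \<Longrightarrow> mul x y z (kadd (A x y) a a') b = kadd (A x z) (mul x y z a b) (mul x y z a' b)"
  using A_cat(3) by blast
lemma mul_add_r:
  "\<lbrakk>x \<in> X; y \<in> X; z \<in> X; a \<in> kcarrier (A x y); b \<in> kcarrier (A y z); b' \<in> kcarrier (A y z)\<rbrakk>
   \<Longrightarrow> mul x y z a (kadd (A y z) b b') = kadd (A x z) (mul x y z a b) (mul x y z a b')"
  using A_cat(4) by blast
lemma mul_smult_l:
  "\<lbrakk>x \<in> X; y \<in> X; z \<in> X; a \<in> kcarrier (A x y); b \<in> kcarrier (A y z)\<rbrakk>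
   \<Longrightarrow> mul x y z (ksmult (A x y) c a) b = ksmult (A x z) c (mul x y z a b)"
  using A_cat(5) by blast
lemma mul_smult_r:
  "\<lbrakk>x \<in> X; y \<in> X; z \<in> X; a \<in> kcarrier (A x y); b \<in> kcarrier (A y z)\<rbrakk>
   \<Longrightarrow> mul x y z a (ksmult (A y z) c b) = ksmult (A x z) c (mul x y z a b)"
  using A_cat(5) by blast
lemma mul_assoc:
  "\<lbrakk>x \<in> X; y \<in> X; z \<in> X; w \<in> X; a \<in> kcarrier (A x y); b \<in> kcarrier (A y z); c \<in> kcarrier (A z w)\<rbrakk>
   \<Longrightarrow> mul x z w (mul x y z a b) c = mul x y w a (mul y z w b c)"
  using A_cat(6) by blast
lemma one_closed[simp,intro]: "x \<in> X \<Longrightarrow> one x \<in> kcarrier (A x x)"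
  using A_cat(7) by blast
lemma mul_one_l[simp]: "\<lbrakk>x \<in> X; y \<in> X; a \<in> kcarrier (A x y)\<rbrakk> \<Longrightarrow> mul x x y (one x) a = a"
  using A_cat(8) by blast
lemma mul_one_r[simp]: "\<lbrakk>x \<in> X; y \<in> X; a \<in> kcarrier (A x y)\<rbrakk> \<Longrightarrow> mul x y y a (one y) = a"
  using A_cat(8) by blast

lemma hmul_closed[simp,intro]:
  "\<lbrakk>x \<in> X; y \<in> X; z \<in> X; a \<in> kcarrier (H x y); b \<in> kcarrier (H y z)\<rbrakk>
   \<Longrightarrow> hmul x y z a b \<in> kcarrier (H x z)"
  using H_cat(2) by blast
lemma hmul_add_l:
  "\<lbrakk>x \<in> X; y \<in> X; z \<in> X; a \<in> kcarrier (H x y); a' \<in> kcarrier (H x y); b \<in> kcarrier (H y z)\<rbrakk>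
   \<Longrightarrow> hmul x y z (kadd (H x y) a a') b = kadd (H x z) (hmul x y z a b) (hmul x y z a' b)"
  using H_cat(3) by blast
lemma hmul_add_r:
  "\<lbrakk>x \<in> X; y \<in> X; z \<in> X; a \<in> kcarrier (H x y); b \<in> kcarrier (H y z); b' \<in> kcarrier (H y z)\<rbrakk>
   \<Longrightarrow> hmul x y z a (kadd (H y z) b b') = kadd (H x z) (hmul x y z a b) (hmul x y z a b')"
  using H_cat(4) by blast
lemma hmul_smult_l:
  "\<lbrakk>x \<in> X; y \<in> X; z \<in> X; a \<in> kcarrier (H x y); b \<in> kcarrier (H y z)\<rbrakk>
   \<Longrightarrow> hmul x y z (ksmult (H x y) c a) b = ksmult (H x z) c (hmul x y z a b)"
  using H_cat(5) by blast
lemma hmul_smult_r: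
  "\<lbrakk>x \<in> X; y \<in> X; z \<in> X; a \<in> kcarrier (H x y); b \<in> kcarrier (H y z)\<rbrakk>
   \<Longrightarrow> hmul x y z a (ksmult (H y z) c b) = ksmult (H x z) c (hmul x y z a b)"
  using H_cat(5) by blast
lemma hone_closed[simp,intro]: "x \<in> X \<Longrightarrow> hone x \<in> kcarrier (H x x)"
  using H_cat(7) by blast
lemma hmul_one_l[simp]: "\<lbrakk>x \<in> X; y \<in> X; a \<in> kcarrier (H x y)\<rbrakk> \<Longrightarrow> hmul x x y (hone x) a = a"
  using H_cat(8) by blast

abbreviation "B x \<equiv> coinv H hone A rho x"
abbreviation "BBal z x y \<equiv> bbal A mul (B x) z x y"
abbreviation "BTens z x y \<equiv> btens H hone A mul rho z x y"
abbreviation "KTens u v x y \<equiv> ktens (A u v) (H x y)"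
abbreviation "can_map z x y \<equiv> can H hone A mul rho z x y"

lemma BTens_eq: "BTens z x y = tensor (A z x) (A x y) (BBal z x y)" by (simp add: btens_def)
lemma bsimple_eq: "bsimple H hone A mul rho z x y = tsimple (A z x) (A x y) (BBal z x y)" by (simp add: bsimple_def)

lemma coinv_carrier: "b \<in> B x \<Longrightarrow> b \<in> kcarrier (A x x)" by (simp add: coinv_def)
lemma coinv_rho: "b \<in> B x \<Longrightarrow> rho x x b = ksimple (A x x) (H x x) b (hone x)" by (simp add: coinv_def)

lemma linmap_mul: "z \<in> X \<Longrightarrow> w \<in> X \<Longrightarrow> y \<in> X \<Longrightarrow>
  a \<in> kcarrier (A z w) \<Longrightarrow> linmap (A w y) (A z y) (mul z w y a)"
  unfolding linmap_def by (simp add: mul_add_r mul_smult_r)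

lemma linmap_hmul: "x \<in> X \<Longrightarrow> y \<in> X \<Longrightarrow> h \<in> kcarrier (H x x) \<Longrightarrow>
  linmap (H x y) (H x y) (hmul x x y h)"
  unfolding linmap_def by (simp add: hmul_add_r hmul_smult_r)

lemma balanced_tensor_BBal: assumes "z \<in> X" "x \<in> X" "y \<in> X" shows "balanced_tensor (A z x) (A x y) (BBal z x y)"
proof -
  interpret M: kmodule "A z x" by unfold_locales (rule A_kmod[OF assms(1,2)])
  interpret N: kmodule "A x y" by unfold_locales (rule A_kmod[OF assms(2,3)])
  show ?thesis
  proof unfold_locales
    show "BBal z x y \<subseteq> (kcarrier (A z x) \<times> kcarrier (A x y)) \<times> kcarrier (A z x) \<times> kcarrier (A x y)"
      using assms by (auto simp: bbal_def kbal_def coinv_carrier)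
  next
    fix p p' c assume "(p, p') \<in> BBal z x y"
    then consider (k) "(p, p') \<in> kbal (A z x) (A x y)"
      | (b) a b a' where "p = (mul z x x a b, a')" "p'
          = (a, mul x x y b a')" "a \<in> kcarrier (A z x)" "b \<in> B x" "a' \<in> kcarrier (A x y)"
      unfolding bbal_def by blast
    then show "((ksmult (A z x) c (fst p), snd p), ksmult (A z x) c (fst p'), snd p') \<in> BBal z x y"
    proof cases
      case k
      then obtain d m n where "p = (ksmult (A z x) d m, n)" "p'
          = (m, ksmult (A x y) d n)" "m \<in> kcarrier (A z x)" "n \<in> kcarrier (A x y)"
        by (auto simp: kbal_def)
      moreover have "ksmult (A z x) c (ksmult (A z x) d m) = ksmult (A z x) d (ksmult (A z x) c m)" using calculation
          by (simp add: M.smult_comm)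
      ultimately show ?thesis unfolding bbal_def kbal_def by auto
    next
      case b
      then have "ksmult (A z x) c (mul z x x a b) = mul z x x (ksmult (A z x) c a) b"
        using assms by (simp add: mul_smult_l coinv_carrier)
      then show ?thesis using b unfolding bbal_def by auto
    qed
  qed
qed

lemma tmap_admissible_mul_K: "z \<in> X \<Longrightarrow> w \<in> X \<Longrightarrow> x \<in> X \<Longrightarrow>
  y \<in> X \<Longrightarrow> a \<in> kcarrier (A z w) \<Longrightarrow>
  tmap_admissible (A w y) (H x y) (kbal (A w y) (H x y)) (A z y) (H x y) (kbal (A z y) (H x y)) (mul z w y a) id"
  by (intro tmap_admissible_kbal A_kmod H_kmod linmap_mul linmap_id)

lemma tmap_admissible_mul_B: assumes "z \<in> X" "w \<in> X" "x \<in> X" "y \<in> X" "a \<in> kcarrier (A z w)"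
  shows "tmap_admissible (A w x) (A x y) (BBal w x y) (A z x) (A x y) (BBal z x y) (mul z w x a) id"
  unfolding tmap_admissible_def
proof (intro conjI)
  show "balanced_tensor (A w x) (A x y) (BBal w x y)" "balanced_tensor (A z x) (A x y) (BBal z x y)"
      using assms balanced_tensor_BBal by auto
  show "linmap (A w x) (A z x) (mul z w x a)" using assms by (simp add: linmap_mul)
  show "linmap (A x y) (A x y) id" by (rule linmap_id)
  show "maps_balanced (BBal w x y) (BBal z x y) (mul z w x a) id"
    unfolding maps_balanced_def
  proof (intro allI impI)
    fix p p' assume "(p, p') \<in> BBal w x y"
    then consider (k) "(p, p') \<in> kbal (A w x) (A x y)"
      | (b) u b v where "p = (mul w x x u b, v)" "p'
          = (u, mul x x y b v)" "u \<in> kcarrier (A w x)" "b \<in> B x" "v \<in> kcarrier (A x y)"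
      unfolding bbal_def by blast
    then show "((mul z w x a (fst p), id (snd p)), mul z w x a (fst p'), id (snd p')) \<in> BBal z x y"
    proof cases
      case k
      then obtain d m n where "p = (ksmult (A w x) d m, n)" "p'
          = (m, ksmult (A x y) d n)" "m \<in> kcarrier (A w x)" "n \<in> kcarrier (A x y)"
        by (auto simp: kbal_def)
      then show ?thesis using assms unfolding bbal_def kbal_def by (auto simp: mul_smult_r)
    next
      case b
      then have "mul z w x a (mul w x x u b) = mul z x x (mul z w x a u) b"
        using assms by (simp add: mul_assoc coinv_carrier)
      then show ?thesis using b assms unfolding bbal_def by auto
    qed
  qed
qed

lemma tmap_admissible_mul_hmul: "x \<in> X \<Longrightarrow> y \<in> X \<Longrightarrow>
  a \<in> kcarrier (A x x) \<Longrightarrow> h \<in> kcarrier (H x x) \<Longrightarrow>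
  tmap_admissible (A x y) (H x y) (kbal (A x y) (H x y)) (A x y) (H x y) (kbal (A x y) (H x y)) (mul x x y a) (hmul x x y h)"
  by (intro tmap_admissible_kbal A_kmod H_kmod linmap_mul linmap_hmul)

lemma balanced_tensor_KTens: "u \<in> X \<Longrightarrow> v \<in> X \<Longrightarrow> x \<in> X \<Longrightarrow>
  y \<in> X \<Longrightarrow> balanced_tensor (A u v) (H x y) (kbal (A u v) (H x y))"
  by (intro balanced_tensor_kbal A_kmod H_kmod)

lemma is_kmod_KTens: "u \<in> X \<Longrightarrow> v \<in> X \<Longrightarrow> x \<in> X \<Longrightarrow>
  y \<in> X \<Longrightarrow> is_kmod (KTens u v x y)"
  by (intro balanced_tensor.is_kmod_tensor balanced_tensor_KTens)

lemma is_kmod_BTens: "z \<in> X \<Longrightarrow> x \<in> X \<Longrightarrow> y \<in> X \<Longrightarrow> is_kmod (BTens z x y)"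
  unfolding BTens_eq by (intro balanced_tensor.is_kmod_tensor balanced_tensor_BBal)

abbreviation "lmulB z w x y a \<equiv> tmap (A w x) (A x y) (BBal w x y) (A z x) (A x y) (BBal z x y) (mul z w x a) id"
abbreviation "lmulK z w x y a \<equiv> kmap (A w y) (H x y) (A z y) (H x y) (mul z w y a) id"

lemma kprod_coinv_left:
  assumes x: "x \<in> X" and y: "y \<in> X" and b: "b \<in> kcarrier (A x x)" and s: "s \<in> kcarrier (KTens x y x y)"
  shows "kprod (A x x) (H x x) (A x y) (H x y) (A x y) (H x y) (mul x x y) (hmul x x y) (ksimple (A x x) (H x x) b (hone x)) s
    = kmap (A x y) (H x y) (A x y) (H x y) (mul x x y b) id s"
proof -
  have "kprod (A x x) (H x x) (A x y) (H x y) (A x y) (H x y) (mul x x y) (hmul x x y) (ksimple (A x x) (H x x) b (hone x)) s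
      = kmap (A x y) (H x y) (A x y) (H x y) (mul x x y b) (hmul x x y (hone x)) s"
    by (rule kprod_ksimple_left)
      (simp_all add: x y b s A_kmod H_kmod linmap_mul linmap_hmul mul_add_l mul_smult_l hmul_add_l hmul_smult_l)
  also have "\<dots> = kmap (A x y) (H x y) (A x y) (H x y) (mul x x y b) id s"
    by (rule tmap_cong[OF tmap_admissible_mul_hmul[OF x y b hone_closed[OF x]] tmap_admissible_mul_K[OF x x x y b]])
      (simp_all add: x y s)
  finally show ?thesis .
qed

lemma rho_mul_coinv:
  assumes x: "x \<in> X" and y: "y \<in> X" and b: "b \<in> B x" and a: "a \<in> kcarrier (A x y)"
  shows "rho x y (mul x x y b a) = lmulK x x x y b (rho x y a)"
  using rho_mul[OF x x y coinv_carrier[OF b] a] coinv_rho[OF b] kprod_coinv_left[OF x y coinv_carrier[OF b]] rho_lin[OF x y] a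
  by (simp add: linmapD)

definition can_pair :: "'x \<Rightarrow> 'x \<Rightarrow> 'x \<Rightarrow> 'a \<times> 'a \<Rightarrow> ('a \<times> 'h \<Rightarrow> int) set" where
  "can_pair z x y = (\<lambda>(a, a'). lmulK z x x y a (rho x y a'))"

lemma can_map_eq_tlift: "can_map z x y = tlift (A z x) (A x y) (BBal z x y) (KTens z y x y) (can_pair z x y)"
  by (simp add: can_def can_pair_def)

lemma rho_closed: "x \<in> X \<Longrightarrow> y \<in> X \<Longrightarrow> a \<in> kcarrier (A x y) \<Longrightarrow>
  rho x y a \<in> kcarrier (KTens x y x y)"
  by (rule linmapD(1)[OF rho_lin])

lemma can_pair_coinv:
  assumes z: "z \<in> X" and x: "x \<in> X" and y: "y \<in> X"
    and u: "u \<in> kcarrier (A z x)" and b: "b \<in> B x" and a': "a' \<in> kcarrier (A x y)"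
  shows "can_pair z x y (mul z x x u b, a') = can_pair z x y (u, mul x x y b a')"
proof -
  have bx: "b \<in> kcarrier (A x x)" using b by (rule coinv_carrier)
  have "can_pair z x y (u, mul x x y b a') = lmulK z x x y u (lmulK x x x y b (rho x y a'))"
    unfolding can_pair_def using rho_mul_coinv[OF x y b a'] by simp
  also have "\<dots> = lmulK z x x y (mul z x x u b) (rho x y a')"
    by (rule tmap_comp[OF tmap_admissible_mul_K[OF x x x y bx] tmap_admissible_mul_K[OF z x x y u]
          tmap_admissible_mul_K[OF z x x y]])
      (simp_all add: u bx a' mul_assoc rho_closed z x y)
  finally show ?thesis unfolding can_pair_def by simp
qed

lemma can_pair_balanced:
  assumes z: "z \<in> X" and x: "x \<in> X" and y: "y \<in> X"
  shows "balanced_biadditive (A z x) (A x y) (BBal z x y) (KTens z y x y) (can_pair z x y)"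
    and "left_klinear (A z x) (A x y) (KTens z y x y) (can_pair z x y)"
proof -
  note ok = tmap_admissible_mul_K[OF z x x y]
  show "balanced_biadditive (A z x) (A x y) (BBal z x y) (KTens z y x y) (can_pair z x y)"
    unfolding can_pair_def
  proof (rule tmap_family_balanced_biadditive[OF ok _ _ A_kmod[OF z x] rho_lin[OF x y]])
    fix p p' assume "(p, p') \<in> BBal z x y - kbal (A z x) (A x y)"
    then obtain u b a' where "p = (mul z x x u b, a')" "p' = (u, mul x x y b a')"
      and "u \<in> kcarrier (A z x)" "b \<in> B x" "a' \<in> kcarrier (A x y)"
      unfolding bbal_def by blast
    then show "(case p of (a, a') \<Rightarrow> lmulK z x x y a (rho x y a'))
        = (case p' of (a, a') \<Rightarrow> lmulK z x x y a (rho x y a'))"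
      using can_pair_coinv[OF z x y] unfolding can_pair_def by simp
  qed (simp_all add: z x y mul_add_l mul_smult_l)
  show "left_klinear (A z x) (A x y) (KTens z y x y) (can_pair z x y)"
    unfolding can_pair_def
    by (rule tmap_family_left_klinear[OF ok _ A_kmod[OF z x] rho_lin[OF x y]]) (simp_all add: z x y mul_smult_l)
qed

lemma can_tensor_lift: "z \<in> X \<Longrightarrow> x \<in> X \<Longrightarrow> y \<in> X \<Longrightarrow>
  tensor_lift (A z x) (A x y) (BBal z x y) (KTens z y x y)"
  by (intro tensor_liftI balanced_tensor_BBal is_kmod_KTens)

lemma linmap_can_map: "z \<in> X \<Longrightarrow> x \<in> X \<Longrightarrow> y \<in> X \<Longrightarrow>
  linmap (BTens z x y) (KTens z y x y) (can_map z x y)"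
  unfolding can_map_eq_tlift BTens_eq by (rule tensor_lift.tlift_linmap[OF can_tensor_lift can_pair_balanced])

lemma can_map_bsimple: "z \<in> X \<Longrightarrow> x \<in> X \<Longrightarrow> y \<in> X \<Longrightarrow>
  a \<in> kcarrier (A z x) \<Longrightarrow> a' \<in> kcarrier (A x y) \<Longrightarrow>
  can_map z x y (bsimple H hone A mul rho z x y a a') = lmulK z x x y a (rho x y a')"
  unfolding can_map_eq_tlift bsimple_eq using tensor_lift.tlift_simple[OF can_tensor_lift can_pair_balanced(1)]
      by (simp add: can_pair_def)

lemma bsimple_closed: "z \<in> X \<Longrightarrow> x \<in> X \<Longrightarrow> y \<in> X \<Longrightarrow>
  a \<in> kcarrier (A z x) \<Longrightarrow> a' \<in> kcarrier (A x y) \<Longrightarrow>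
  bsimple H hone A mul rho z x y a a' \<in> kcarrier (BTens z x y)"
  unfolding bsimple_eq BTens_eq by (rule balanced_tensor.simple_in[OF balanced_tensor_BBal])

lemma can_map_lmulB:
  assumes z: "z \<in> X" and w: "w \<in> X" and x: "x \<in> X" and y: "y \<in> X" and a: "a \<in> kcarrier (A z w)"
    and t: "t \<in> kcarrier (BTens w x y)"
  shows "can_map z x y (lmulB z w x y a t) = lmulK z w x y a (can_map w x y t)"
proof -
  interpret L: tensor_lift "A w x" "A x y" "BBal w x y" "KTens z y x y"
      by (intro tensor_liftI balanced_tensor_BBal is_kmod_KTens z w x y)
  have lhs: "additive_map L.Tens (KTens z y x y) (\<lambda>t. can_map z x y (lmulB z w x y a t))"
    by (rule additive_map_comp[OF tmap_additive_map[OF tmap_admissible_mul_B[OF z w x y a]]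
          linmap_additive_map[OF linmap_can_map[OF z x y, unfolded BTens_eq]]])
  have rhs: "additive_map L.Tens (KTens z y x y) (\<lambda>t. lmulK z w x y a (can_map w x y t))"
    by (rule additive_map_comp[OF linmap_additive_map[OF linmap_can_map[OF w x y, unfolded BTens_eq]]
          tmap_additive_map[OF tmap_admissible_mul_K[OF z w x y a]]])
  show ?thesis
  proof (rule L.tensor_ext[OF lhs rhs _ t[unfolded BTens_eq]])
    fix u v assume u: "u \<in> kcarrier (A w x)" and v: "v \<in> kcarrier (A x y)"
    have "can_map z x y (lmulB z w x y a (tsimple (A w x) (A x y) (BBal w x y) u v))
       = kmap (A x y) (H x y) (A z y) (H x y) (mul z x y (mul z w x a u)) id (rho x y v)"
      using tmap_simple[OF tmap_admissible_mul_B[OF z w x y a] u v] can_map_bsimple[OF z x y _ v, of "mul z w x a u"] u a z w x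
      by (simp add: bsimple_eq)
    also have "\<dots> = lmulK z w x y a (kmap (A x y) (H x y) (A w y) (H x y) (mul w x y u) id (rho x y v))"
      by (rule tmap_comp[OF tmap_admissible_mul_K[OF w x x y u] tmap_admissible_mul_K[OF z w x y a]
          tmap_admissible_mul_K[OF z x x y], symmetric])
         (simp_all add: u a v z w x y mul_assoc rho_closed)
    also have "kmap (A x y) (H x y) (A w y) (H x y) (mul w x y u) id (rho x y v)
        = can_map w x y (tsimple (A w x) (A x y) (BBal w x y) u v)"
      using can_map_bsimple[OF w x y u v] by (simp add: bsimple_eq)
    finally show "can_map z x y (lmulB z w x y a (tsimple (A w x) (A x y) (BBal w x y) u v))
        = lmulK z w x y a (can_map w x y (tsimple (A w x) (A x y) (BBal w x y) u v))" .
  qed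
qed

abbreviation "can_inv \<gamma> z x y \<equiv> klift (A z y) (H x y) (BTens z x y) (\<lambda>(a, h). lmulB z y x y a (\<gamma> h))"

lemma can_inv_pair_balanced:
  assumes z: "z \<in> X" and x: "x \<in> X" and y: "y \<in> X" and g: "linmap (H x y) (BTens y x y) \<gamma>"
  shows "balanced_biadditive (A z y) (H x y) (kbal (A z y) (H x y)) (BTens z x y) (\<lambda>(a, h). lmulB z y x y a (\<gamma> h))"
    and "left_klinear (A z y) (H x y) (BTens z x y) (\<lambda>(a, h). lmulB z y x y a (\<gamma> h))"
proof -
  note ok = tmap_admissible_mul_B[OF z y x y]
  show "balanced_biadditive (A z y) (H x y) (kbal (A z y) (H x y)) (BTens z x y) (\<lambda>(a, h). lmulB z y x y a (\<gamma> h))"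
    unfolding BTens_eq
    by (rule tmap_family_balanced_biadditive[where \<Phi> = "mul z y x", OF ok _ _ A_kmod[OF z y] g[unfolded BTens_eq]])
      (simp_all add: z x y mul_add_l mul_smult_l)
  show "left_klinear (A z y) (H x y) (BTens z x y) (\<lambda>(a, h). lmulB z y x y a (\<gamma> h))"
    unfolding BTens_eq
    by (rule tmap_family_left_klinear[where \<Phi> = "mul z y x", OF ok _ A_kmod[OF z y] g[unfolded BTens_eq]])
      (simp_all add: z x y mul_smult_l)
qed

lemma can_inv_tensor_lift: "z \<in> X \<Longrightarrow> x \<in> X \<Longrightarrow> y \<in> X \<Longrightarrow>
  tensor_lift (A z y) (H x y) (kbal (A z y) (H x y)) (BTens z x y)"
  by (intro tensor_liftI balanced_tensor_KTens is_kmod_BTens)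

lemma linmap_can_inv: "z \<in> X \<Longrightarrow> x \<in> X \<Longrightarrow> y \<in> X \<Longrightarrow>
  linmap (H x y) (BTens y x y) \<gamma> \<Longrightarrow>
  linmap (KTens z y x y) (BTens z x y) (can_inv \<gamma> z x y)"
  by (rule tensor_lift.tlift_linmap[OF can_inv_tensor_lift can_inv_pair_balanced])

lemma can_inv_simple: "z \<in> X \<Longrightarrow> x \<in> X \<Longrightarrow> y \<in> X \<Longrightarrow>
  linmap (H x y) (BTens y x y) \<gamma> \<Longrightarrow>
  a \<in> kcarrier (A z y) \<Longrightarrow> h \<in> kcarrier (H x y) \<Longrightarrow>
  can_inv \<gamma> z x y (ksimple (A z y) (H x y) a h) = lmulB z y x y a (\<gamma> h)"
  using tensor_lift.tlift_simple[OF can_inv_tensor_lift can_inv_pair_balanced(1)] by simp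

lemma can_map_can_inv:
  assumes z: "z \<in> X" and x: "x \<in> X" and y: "y \<in> X" and g: "linmap (H x y) (BTens y x y) \<gamma>"
    and can_\<gamma>: "\<forall>h\<in>kcarrier (H x y). can_map y x y (\<gamma> h) = ksimple (A y y) (H x y) (one y) h"
    and s: "s \<in> kcarrier (KTens z y x y)"
  shows "can_map z x y (can_inv \<gamma> z x y s) = s"
proof -
  interpret L: tensor_lift "A z y" "H x y" "kbal (A z y) (H x y)" "KTens z y x y"
      by (intro tensor_liftI balanced_tensor_KTens is_kmod_KTens z x y)
  have lhs: "additive_map L.Tens (KTens z y x y) (\<lambda>s. can_map z x y (can_inv \<gamma> z x y s))"
    by (rule additive_map_comp[OF linmap_additive_map[OF linmap_can_inv[OF z x y g]]
          linmap_additive_map[OF linmap_can_map[OF z x y]]])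
  show ?thesis
  proof (rule L.tensor_ext[OF lhs additive_map_id _ s])
    fix a h assume a: "a \<in> kcarrier (A z y)" and h: "h \<in> kcarrier (H x y)"
    have gin: "\<gamma> h \<in> kcarrier (BTens y x y)" using linmapD(1)[OF g h] .
    have "can_map z x y (can_inv \<gamma> z x y (ksimple (A z y) (H x y) a h)) = can_map z x y (lmulB z y x y a (\<gamma> h))"
      using can_inv_simple[OF z x y g a h] by simp
    also have "\<dots> = lmulK z y x y a (can_map y x y (\<gamma> h))" by (rule can_map_lmulB[OF z y x y a gin])
    also have "\<dots> = lmulK z y x y a (ksimple (A y y) (H x y) (one y) h)" using can_\<gamma> h by simp
    also have "\<dots> = ksimple (A z y) (H x y) a h"
      using tmap_simple[OF tmap_admissible_mul_K[OF z y x y a] one_closed[OF y] h] a z y by simp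
    finally show "can_map z x y (can_inv \<gamma> z x y (ksimple (A z y) (H x y) a h)) = ksimple (A z y) (H x y) a h" .
  qed
qed

lemma can_inv_lmulK:
  assumes z: "z \<in> X" and x: "x \<in> X" and y: "y \<in> X" and g: "linmap (H x y) (BTens y x y) \<gamma>"
    and a: "a \<in> kcarrier (A z x)" and u: "u \<in> kcarrier (KTens x y x y)"
  shows "can_inv \<gamma> z x y (lmulK z x x y a u) = lmulB z x x y a (can_inv \<gamma> x x y u)"
proof -
  interpret L: tensor_lift "A x y" "H x y" "kbal (A x y) (H x y)" "BTens z x y"
      by (intro tensor_liftI balanced_tensor_KTens is_kmod_BTens z x y)
  have lhs: "additive_map L.Tens (BTens z x y) (\<lambda>u. can_inv \<gamma> z x y (lmulK z x x y a u))"
    by (rule additive_map_comp[OF tmap_additive_map[OF tmap_admissible_mul_K[OF z x x y a]]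
          linmap_additive_map[OF linmap_can_inv[OF z x y g]]])
  have rhs: "additive_map L.Tens (BTens z x y) (\<lambda>u. lmulB z x x y a (can_inv \<gamma> x x y u))"
    by (rule additive_map_comp[OF linmap_additive_map[OF linmap_can_inv[OF x x y g]]
          tmap_additive_map[OF tmap_admissible_mul_B[OF z x x y a], folded BTens_eq]])
  show ?thesis
  proof (rule L.tensor_ext[OF lhs rhs _ u])
    fix a'' h assume a'': "a'' \<in> kcarrier (A x y)" and h: "h \<in> kcarrier (H x y)"
    have gin: "\<gamma> h \<in> kcarrier (BTens y x y)" using linmapD(1)[OF g h] .
    have "can_inv \<gamma> z x y (lmulK z x x y a (ksimple (A x y) (H x y) a'' h)) = lmulB z y x y (mul z x y a a'') (\<gamma> h)"
      using tmap_simple[OF tmap_admissible_mul_K[OF z x x y a] a'' h] can_inv_simple[OF z x y g _ h, of "mul z x y a a''"] a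
          a'' z x y by simp
    also have "\<dots> = lmulB z x x y a (lmulB x y x y a'' (\<gamma> h))"
      by (rule tmap_comp[OF tmap_admissible_mul_B[OF x y x y a''] tmap_admissible_mul_B[OF z x x y a]
          tmap_admissible_mul_B[OF z y x y], symmetric])
         (simp_all add: a a'' z x y mul_assoc gin[unfolded BTens_eq])
    also have "lmulB x y x y a'' (\<gamma> h) = can_inv \<gamma> x x y (ksimple (A x y) (H x y) a'' h)"
      using can_inv_simple[OF x x y g a'' h] by simp
    finally show "can_inv \<gamma> z x y (lmulK z x x y a (ksimple (A x y) (H x y) a'' h))
        = lmulB z x x y a (can_inv \<gamma> x x y (ksimple (A x y) (H x y) a'' h))" .
  qed
qed

lemma linmap_ksimple_one:
  assumes x: "x \<in> X" and y: "y \<in> X"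
  shows "linmap (H x y) (KTens y y x y) (\<lambda>h. ksimple (A y y) (H x y) (one y) h)"
proof -
  interpret S: balanced_tensor "A y y" "H x y" "kbal (A y y) (H x y)" by (rule balanced_tensor_KTens[OF y y x y])
  show ?thesis unfolding linmap_def
    using S.simple_add_r S.simple_smult_r[OF order_refl] one_closed[OF y] by auto
qed

section \<open>Galois conditions\<close>

lemma can_map_bsimple_one:
  assumes x: "x \<in> X" and y: "y \<in> X" and a: "a \<in> kcarrier (A x y)"
  shows "can_map x x y (bsimple H hone A mul rho x x y (one x) a) = rho x y a"
  using can_map_bsimple[OF x x y one_closed[OF x] a]
    tmap_id[OF tmap_admissible_mul_K[OF x x x y one_closed[OF x]] _ _ rho_closed[OF x y a]] x y
  by simp

text \<open>In the last clause of a translation map, \<open>can_inv \<gamma> x x y (\<rho> a)\<close> is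
  \<open>\<Sum>\<^sub>i a\<^sub>[\<^sub>0\<^sub>] l\<^sub>i(a\<^sub>[\<^sub>1\<^sub>]) \<otimes>\<^bsub>B\<^sub>x\<^esub> r\<^sub>i(a\<^sub>[\<^sub>1\<^sub>])\<close>.\<close>

definition translation_map :: "'x \<Rightarrow> 'x \<Rightarrow> ('h \<Rightarrow> ('a \<times> 'a \<Rightarrow> int) set) \<Rightarrow> bool" where
  "translation_map x y \<gamma> \<longleftrightarrow>
     linmap (H x y) (BTens y x y) \<gamma> \<and>
     (\<forall>h\<in>kcarrier (H x y). can_map y x y (\<gamma> h) = ksimple (A y y) (H x y) (one y) h) \<and>
     (\<forall>a\<in>kcarrier (A x y). can_inv \<gamma> x x y (rho x y a) = bsimple H hone A mul rho x x y (one x) a)"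

definition galois_bij :: bool where
  "galois_bij \<longleftrightarrow> (\<forall>x\<in>X. \<forall>y\<in>X. \<forall>z\<in>X.
     bij_betw (can_map z x y) (kcarrier (BTens z x y)) (kcarrier (KTens z y x y)))"

definition galois_split :: bool where
  "galois_split \<longleftrightarrow> (\<forall>x\<in>X. \<forall>y\<in>X.
     bij_betw (can_map y x y) (kcarrier (BTens y x y)) (kcarrier (KTens y y x y)) \<and>
     (\<exists>g. linmap (KTens x y x y) (BTens x x y) g \<and>
         (\<forall>t\<in>kcarrier (BTens x x y). g (can_map x x y t) = t)))"

definition galois_translation :: bool where
  "galois_translation \<longleftrightarrow> (\<forall>x\<in>X. \<forall>y\<in>X. \<exists>\<gamma>. translation_map x y \<gamma>)"

lemma galois_bij_imp_split: "galois_bij \<Longrightarrow> galois_split"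
  unfolding galois_bij_def galois_split_def
  by (meson linmap_inv_into[OF is_kmod_BTens linmap_can_map] bij_betw_inv_into_left)

text \<open>The second identity holds because both sides have the same image under \<open>can\<^sup>x\<^sub>x\<^sub>y\<close>,
  which has a left inverse.\<close>

lemma translation_map_inv_can:
  assumes x: "x \<in> X" and y: "y \<in> X"
    and bij: "bij_betw (can_map y x y) (kcarrier (BTens y x y)) (kcarrier (KTens y y x y))"
    and g: "\<forall>t\<in>kcarrier (BTens x x y). g (can_map x x y t) = t"
  shows "translation_map x y (\<lambda>h. inv_into (kcarrier (BTens y x y)) (can_map y x y) (ksimple (A y y) (H x y) (one y) h))"
    (is "translation_map x y ?\<gamma>")
proof -
  have lin: "linmap (H x y) (BTens y x y) ?\<gamma>"
    by (rule linmap_comp[OF linmap_ksimple_one[OF x y] linmap_inv_into[OF is_kmod_BTens[OF y x y] linmap_can_map[OF y x y] bij]])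
  have can_\<gamma>: "\<forall>h\<in>kcarrier (H x y). can_map y x y (?\<gamma> h) = ksimple (A y y) (H x y) (one y) h"
    using bij linmapD(1)[OF linmap_ksimple_one[OF x y]] by (simp add: bij_betw_def f_inv_into_f)
  have "can_inv ?\<gamma> x x y (rho x y a) = bsimple H hone A mul rho x x y (one x) a"
    if a: "a \<in> kcarrier (A x y)" for a
  proof -
    have "can_map x x y (can_inv ?\<gamma> x x y (rho x y a)) = can_map x x y (bsimple H hone A mul rho x x y (one x) a)"
      using can_map_can_inv[OF x x y lin can_\<gamma> rho_closed[OF x y a]] can_map_bsimple_one[OF x y a] by simp
    then show ?thesis
      using g linmapD(1)[OF linmap_can_inv[OF x x y lin] rho_closed[OF x y a]]
        bsimple_closed[OF x x y one_closed[OF x] a] by metis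
  qed
  with lin can_\<gamma> show ?thesis unfolding translation_map_def by blast
qed

lemma galois_split_imp_translation: "galois_split \<Longrightarrow> galois_translation"
  unfolding galois_split_def galois_translation_def using translation_map_inv_can by meson

lemma can_inv_can_map:
  assumes z: "z \<in> X" and x: "x \<in> X" and y: "y \<in> X" and \<gamma>: "translation_map x y \<gamma>"
    and t: "t \<in> kcarrier (BTens z x y)"
  shows "can_inv \<gamma> z x y (can_map z x y t) = t"
proof -
  have lin: "linmap (H x y) (BTens y x y) \<gamma>"
    and \<gamma>_rho: "\<forall>a\<in>kcarrier (A x y). can_inv \<gamma> x x y (rho x y a)
        = bsimple H hone A mul rho x x y (one x) a"
    using \<gamma> unfolding translation_map_def by blast+
  interpret L: tensor_lift "A z x" "A x y" "BBal z x y" "BTens z x y"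
      by (intro tensor_liftI balanced_tensor_BBal is_kmod_BTens z x y)
  have lhs: "additive_map L.Tens (BTens z x y) (\<lambda>t. can_inv \<gamma> z x y (can_map z x y t))"
    by (rule additive_map_comp[OF linmap_additive_map[OF linmap_can_map[OF z x y, unfolded BTens_eq]]
          linmap_additive_map[OF linmap_can_inv[OF z x y lin]]])
  have rhs: "additive_map L.Tens (BTens z x y) (\<lambda>t. t)"
    by (simp add: BTens_eq additive_map_id)
  show ?thesis
  proof (rule L.tensor_ext[OF lhs rhs _ t[unfolded BTens_eq]])
    fix a a' assume a: "a \<in> kcarrier (A z x)" and a': "a' \<in> kcarrier (A x y)"
    have "can_inv \<gamma> z x y (can_map z x y (tsimple (A z x) (A x y) (BBal z x y) a a'))
        = can_inv \<gamma> z x y (lmulK z x x y a (rho x y a'))"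
      using can_map_bsimple[OF z x y a a'] by (simp add: bsimple_eq)
    also have "\<dots> = lmulB z x x y a (can_inv \<gamma> x x y (rho x y a'))"
      by (rule can_inv_lmulK[OF z x y lin a rho_closed[OF x y a']])
    also have "\<dots> = lmulB z x x y a (tsimple (A x x) (A x y) (BBal x x y) (one x) a')"
      using \<gamma>_rho a' by (simp add: bsimple_eq)
    also have "\<dots> = tsimple (A z x) (A x y) (BBal z x y) a a'"
      using tmap_simple[OF tmap_admissible_mul_B[OF z x x y a] one_closed[OF x] a'] a z x by simp
    finally show "can_inv \<gamma> z x y (can_map z x y (tsimple (A z x) (A x y) (BBal z x y) a a'))
        = tsimple (A z x) (A x y) (BBal z x y) a a'" .
  qed
qed

lemma translation_imp_galois_bij: "galois_translation \<Longrightarrow> galois_bij"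
  unfolding galois_translation_def galois_bij_def
proof (intro ballI)
  fix x y z assume "\<forall>x\<in>X. \<forall>y\<in>X. \<exists>\<gamma>. translation_map x y \<gamma>" and x: "x \<in> X"
      and y: "y \<in> X" and z: "z \<in> X"
  then obtain \<gamma> where \<gamma>: "translation_map x y \<gamma>" by blast
  then have lin: "linmap (H x y) (BTens y x y) \<gamma>"
    and can_\<gamma>: "\<forall>h\<in>kcarrier (H x y). can_map y x y (\<gamma> h) = ksimple (A y y) (H x y) (one y) h"
    unfolding translation_map_def by blast+
  show "bij_betw (can_map z x y) (kcarrier (BTens z x y)) (kcarrier (KTens z y x y))"
  proof (rule bij_betw_byWitness[where f' = "can_inv \<gamma> z x y"])
    show "\<forall>t\<in>kcarrier (BTens z x y). can_inv \<gamma> z x y (can_map z x y t) = t"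
      using can_inv_can_map[OF z x y \<gamma>] by blast
    show "\<forall>s\<in>kcarrier (KTens z y x y). can_map z x y (can_inv \<gamma> z x y s) = s"
      using can_map_can_inv[OF z x y lin can_\<gamma>] by blast
    show "can_map z x y ` kcarrier (BTens z x y) \<subseteq> kcarrier (KTens z y x y)"
      using linmapD(1)[OF linmap_can_map[OF z x y]] by blast
    show "can_inv \<gamma> z x y ` kcarrier (KTens z y x y) \<subseteq> kcarrier (BTens z x y)"
      using linmapD(1)[OF linmap_can_inv[OF z x y lin]] by blast
  qed
qed

end

theorem theorem3p5:
  fixes X :: "'x set"
    and H :: "'x \<Rightarrow> 'x \<Rightarrow> ('h, 'k::comm_ring_1) kmod"
    and hmul :: "'x \<Rightarrow> 'x \<Rightarrow> 'x \<Rightarrow> 'h \<Rightarrow> 'h \<Rightarrow> 'h" and hone :: "'x \<Rightarrow> 'h"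
    and D :: "'x \<Rightarrow> 'x \<Rightarrow> 'h \<Rightarrow> ('h \<times> 'h \<Rightarrow> int) set" and e :: "'x
        \<Rightarrow> 'x \<Rightarrow> 'h \<Rightarrow> 'k"
    and A :: "'x \<Rightarrow> 'x \<Rightarrow> ('a, 'k) kmod"
    and mul :: "'x \<Rightarrow> 'x \<Rightarrow> 'x \<Rightarrow> 'a \<Rightarrow> 'a \<Rightarrow> 'a" and one :: "'x \<Rightarrow> 'a"
    and rho :: "'x \<Rightarrow> 'x \<Rightarrow> 'a \<Rightarrow> ('a \<times> 'h \<Rightarrow> int) set"
  assumes "semi_hopf_cat X H hmul hone D e"
    and "rcomod_cat X H hmul hone D e A mul one rho"
  shows "((\<forall>x\<in>X. \<forall>y\<in>X. \<forall>z\<in>X.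
             bij_betw (can H hone A mul rho z x y)
               (kcarrier (btens H hone A mul rho z x y)) (kcarrier (ktens (A z y) (H x y))))
        \<longleftrightarrow>
          (\<forall>x\<in>X. \<forall>y\<in>X.
             bij_betw (can H hone A mul rho y x y)
               (kcarrier (btens H hone A mul rho y x y)) (kcarrier (ktens (A y y) (H x y))) \<and>
             (\<exists>g. linmap (ktens (A x y) (H x y)) (btens H hone A mul rho x x y) g \<and>
                  (\<forall>t\<in>kcarrier (btens H hone A mul rho x x y).
                     g (can H hone A mul rho x x y t) = t))))
       \<and>
         ((\<forall>x\<in>X. \<forall>y\<in>X.
             bij_betw (can H hone A mul rho y x y)
               (kcarrier (btens H hone A mul rho y x y)) (kcarrier (ktens (A y y) (H x y))) \<and>
             (\<exists>g. linmap (ktens (A x y) (H x y)) (btens H hone A mul rho x x y) g \<and>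
                  (\<forall>t\<in>kcarrier (btens H hone A mul rho x x y).
                     g (can H hone A mul rho x x y t) = t)))
        \<longleftrightarrow>
          (\<forall>x\<in>X. \<forall>y\<in>X. \<exists>\<gamma>.
             linmap (H x y) (btens H hone A mul rho y x y) \<gamma> \<and>
             (\<forall>h\<in>kcarrier (H x y).
                can H hone A mul rho y x y (\<gamma> h) = ksimple (A y y) (H x y) (one y) h) \<and>
             (\<forall>a\<in>kcarrier (A x y).
                klift (A x y) (H x y) (btens H hone A mul rho x x y)
                  (\<lambda>(a', h). tmap (A y x) (A x y) (bbal A mul (coinv H hone A rho x) y x y)
                                  (A x x) (A x y) (bbal A mul (coinv H hone A rho x) x x y)
                                  (mul x y x a') id (\<gamma> h))
                  (rho x y a)
                = bsimple H hone A mul rho x x y (one x) a)))"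
proof -
  interpret coaction_cat X H hmul hone A mul one rho
  proof
    show "klin_cat X H hmul hone" using assms(1) by (simp add: semi_hopf_cat_def)
    show "klin_cat X A mul one" using assms(2) by (simp add: rcomod_cat_def)
  qed (use assms(2) in \<open>auto simp: rcomod_cat_def is_rcomodule_def\<close>)
  have "galois_bij \<longleftrightarrow> galois_split" "galois_split \<longleftrightarrow> galois_translation"
    using galois_bij_imp_split galois_split_imp_translation translation_imp_galois_bij by blast+
  then show ?thesis
    unfolding galois_bij_def galois_split_def galois_translation_def translation_map_def
      btens_def can_def by simp
qed

end
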